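(* In the notation of the context, for $0\le i\le D-1$ the following identities of Laurent polynomials in $\eta$ hold: $$\eta\,\ell_i^-=(\tau q^D+\tau^{-1})(q^{i-D}-1)\ell^+_{i-1}+(\tau q^D+\tau^{-1})q^{i-D}\ell^-_i+\tau(q^D-q^{i+1}+1)\ell^+_i+\tau(1-q^{i+1})\ell^-_{i+1},$$ $$\eta^{-1}\ell_i^-=\tau^{-1}(1-q^{i-D})\ell^-_{i-1}+(\tau q^D+\tau^{-1})(1-q^{i-D})\ell^+_{i-1}-\tau(q^D-q^i+1)\ell^+_i,$$ $$\eta\,\ell_i^+=\tau^{-1}(1-q^{i-D})\ell^+_{i-1}-\tau^{-1}q^{i-D}\ell^-_i,$$ $$\eta^{-1}\ell_i^+=\tau^{-1}q^{i-D+1}\ell^-_i+(\tau q^D+\tau^{-1})q^{i-D+1}\ell^+_i+\tau(1-q^{i+1})\ell^+_{i+1}.$$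
   Context: Let $q$ be a prime power, $D\ge3$ an integer, and $e\in\{0,\tfrac12,1,\tfrac32,2\}$ (with $q$ a square when $e\in\{\tfrac12,\tfrac32\}$). Let $\tau=\sqrt{-1}\,q^{-(D+e)/2}$. Write $(r;q)_n=(1-r)(1-rq)\cdots(1-rq^{n-1})$ and ${}_3\phi_2\!\left(\begin{smallmatrix}r_1,r_2,r_3\\ s_1,s_2\end{smallmatrix};q,z\right)=\sum_{n\ge0}\frac{(r_1;q)_n(r_2;q)_n(r_3;q)_n}{(s_1;q)_n(s_2;q)_n}\frac{z^n}{(q;q)_n}$. For a nonzero scalar $t$ and integers $0\le i\le d$ define the Laurent polynomial $h_i(\eta;t,d;q)=\frac{(q^{-d};q)_i}{t^i}\,{}_3\phi_2\!\left(\begin{smallmatrix}q^{-i},\,t\eta^{-1},\,t\eta\\ 0,\,q^{-d}\end{smallmatrix};q,q\right)$. Let $h_i=h_i(\eta;\tau,D;q)$ ($0\le i\le D$), $h_i^\perp=h_i(\eta;\tau q,D-2;q)$ ($0\le i\le D-2$), $h^\perp_{-1}=0$, $h^\perp_{D-1}=\eta^{1-D}\prod_{n=1}^{D-1}(\eta-\tau q^n)(\eta-\tau^{-1}q^{-n})$, and $p^\perp=\eta^{-1}(\eta-\tau)(\eta-\tau^{-1}q^{-D})$. For $0\le i\le D-1$ define $\ell_i^+=\frac{h_{i+1}-p^\perp h_i^\perp}{\tau^{i+1}(1-q^D)(q;q)_i}$ and $\ell_i^-=\frac{q^D-q^i}{\tau^i(q^D-1)(q;q)_i}\Big(h_i-\frac{1-q^i}{q^D-q^i}p^\perp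 h^\perp_{i-1}\Big)$ (the non-symmetric dual $q$-Krawtchouk polynomials). Also set $\ell^\pm_{-1}=0$, $\ell_D^+=-\frac{\eta^{-1}p^\perp h^\perp_{D-1}}{\tau^{D+1}(q;q)_D}$, $\ell_D^-=\frac{p^\perp h^\perp_{D-1}}{\tau^D(q;q)_D}$. *)

theory Defs
  imports Complex_Main "HOL-Computational_Algebra.Primes"
begin

definition qpoch :: "complex \<Rightarrow> complex \<Rightarrow> nat \<Rightarrow> complex" where
  "qpoch r q n = (\<Prod>k<n. 1 - r * q ^ k)"

text \<open>Terminating basic hypergeometric series 3phi2 with r1 = q^(-i):
  all terms with index n > i vanish since (q^(-i);q)_n = 0, so the series is the finite sum below.\<close>
definition phi32_term :: "nat \<Rightarrow> complex \<Rightarrow> complex \<Rightarrow> complex \<Rightarrow> complex \<Rightarrow> complex \<Rightarrow> complex \<Rightarrow> complex" where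
  "phi32_term i r2 r3 s1 s2 q z =
     (\<Sum>n\<le>i. qpoch (inverse (q ^ i)) q n * qpoch r2 q n * qpoch r3 q n
              / (qpoch s1 q n * qpoch s2 q n) * z ^ n / qpoch q q n)"

definition hpoly :: "complex \<Rightarrow> complex \<Rightarrow> nat \<Rightarrow> complex \<Rightarrow> nat \<Rightarrow> complex" where
  "hpoly q t d \<eta> i =
     qpoch (inverse (q ^ d)) q i / t ^ i *
     phi32_term i (t / \<eta>) (t * \<eta>) 0 (inverse (q ^ d)) q q"

definition hD :: "complex \<Rightarrow> nat \<Rightarrow> complex \<Rightarrow> complex \<Rightarrow> nat \<Rightarrow> complex" where
  "hD q D \<tau> \<eta> i = hpoly q \<tau> D \<eta> i"

definition hperp :: "complex \<Rightarrow> nat \<Rightarrow> complex \<Rightarrow> complex \<Rightarrow> int \<Rightarrow> complex" where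
  "hperp q D \<tau> \<eta> i =
     (if i = -1 then 0
      else if 0 \<le> i \<and> i \<le> int D - 2 then hpoly q (\<tau> * q) (D - 2) \<eta> (nat i)
      else if i = int D - 1 then
        \<eta> powi (1 - int D) * (\<Prod>n\<in>{1..D-1}. (\<eta> - \<tau> * q ^ n) * (\<eta> - inverse \<tau> * inverse (q ^ n)))
      else 0)"

definition pperp :: "complex \<Rightarrow> nat \<Rightarrow> complex \<Rightarrow> complex \<Rightarrow> complex" where
  "pperp q D \<tau> \<eta> = inverse \<eta> * (\<eta> - \<tau>) * (\<eta> - inverse \<tau> * inverse (q ^ D))"

definition ellp :: "complex \<Rightarrow> nat \<Rightarrow> complex \<Rightarrow> complex \<Rightarrow> int \<Rightarrow> complex" where
  "ellp q D \<tau> \<eta> i =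
     (if i = -1 then 0
      else if 0 \<le> i \<and> i \<le> int D - 1 then
        (hD q D \<tau> \<eta> (nat i + 1) - pperp q D \<tau> \<eta> * hperp q D \<tau> \<eta> i)
          / (\<tau> ^ (nat i + 1) * (1 - q ^ D) * qpoch q q (nat i))
      else if i = int D then
        - (inverse \<eta> * pperp q D \<tau> \<eta> * hperp q D \<tau> \<eta> (int D - 1))
          / (\<tau> ^ (D + 1) * qpoch q q D)
      else 0)"

definition ellm :: "complex \<Rightarrow> nat \<Rightarrow> complex \<Rightarrow> complex \<Rightarrow> int \<Rightarrow> complex" where
  "ellm q D \<tau> \<eta> i =
     (if i = -1 then 0
      else if 0 \<le> i \<and> i \<le> int D - 1 then
        (q ^ D - q ^ nat i) / (\<tau> ^ nat i * (q ^ D - 1) * qpoch q q (nat i)) *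
        (hD q D \<tau> \<eta> (nat i)
          - (1 - q ^ nat i) / (q ^ D - q ^ nat i) * pperp q D \<tau> \<eta> * hperp q D \<tau> \<eta> (i - 1))
      else if i = int D then
        pperp q D \<tau> \<eta> * hperp q D \<tau> \<eta> (int D - 1) / (\<tau> ^ D * qpoch q q D)
      else 0)"

end

theory Submission
  imports Defs
begin

text \<open>
  Both \<open>h\<^sub>i = h\<^sub>i(\<eta>;\<tau>,D)\<close> and \<open>h\<^sup>\<perp>\<^sub>i\<close> expand in the basis
  \<open>u\<^sub>n(t) = (t/\<eta>;q)\<^sub>n (t\<eta>;q)\<^sub>n\<close>, which depends on \<open>\<eta>\<close> only through
  \<open>x = \<eta> + \<eta>\<^sup>-\<^sup>1\<close>. Rewriting \<open>u\<^sub>n(\<tau>)\<close> in the basis \<open>u\<^sub>n(\<tau>q)\<close> and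
  multiplying \<open>u\<^sub>n(\<tau>q)\<close> by \<open>x\<close> are both two-term operations, so comparing coefficients
  yields two contiguous relations between \<open>h\<close> and \<open>h\<^sup>\<perp>\<close>:
  \<open>(1 - q\<^sup>i\<^sup>-\<^sup>D) h\<^sub>i = (1 - q\<^sup>-\<^sup>D) h\<^sup>\<perp>\<^sub>i + (1 - q\<^sup>i)(q\<^sup>-\<^sup>D x - \<tau> - \<tau>\<^sup>-\<^sup>1 q\<^sup>-\<^sup>D) h\<^sup>\<perp>\<^sub>i\<^sub>-\<^sub>1\<close> and
  \<open>h\<^sub>i\<^sub>+\<^sub>1 = (x - \<tau> - \<tau>\<^sup>-\<^sup>1 q\<^sup>-\<^sup>D) h\<^sup>\<perp>\<^sub>i - (1 - q\<^sup>-\<^sup>D)(1 - q\<^sup>i) h\<^sup>\<perp>\<^sub>i\<^sub>-\<^sub>1\<close>.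
  Multiplied by the common denominator \<open>\<tau>\<^sup>i (q\<^sup>D - 1) (q;q)\<^sub>i\<close>, the polynomials
  \<open>\<ell>\<^sup>\<plusminus>\<close> at \<open>i - 1, i, i + 1\<close> become linear combinations of \<open>h\<close> and \<open>p\<^sup>\<perp>h\<^sup>\<perp>\<close>,
  and each of the four identities reduces to a rational identity in \<open>\<eta>\<close> that follows
  from the two relations. Throughout, \<open>q\<close> is only required not to be a root of unity
  (\<open>inj ((^) q)\<close>); this keeps every Pochhammer denominator nonzero.
\<close>

lemma qpoch_0 [simp]: "qpoch r q 0 = 1"
  by (simp add: qpoch_def)

lemma qpoch_Suc: "qpoch r q (Suc n) = qpoch r q n * (1 - r * q ^ n)"
  by (simp add: qpoch_def)

lemma qpoch_Suc_shift: "qpoch r q (Suc n) = (1 - r) * qpoch (r * q) q n"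
  unfolding qpoch_def prod.lessThan_Suc_shift by (simp add: mult.assoc)

lemma qpoch_add: "qpoch r q (m + n) = qpoch r q m * qpoch (r * q ^ m) q n"
  by (induction n) (simp_all add: qpoch_Suc power_add mult_ac)

lemma qpoch_zero_base [simp]: "qpoch 0 q n = 1"
  by (simp add: qpoch_def)

lemma power_inj_imp_nonzero:
  fixes q :: "'a::idom"
  assumes "inj ((^) q)"
  shows "q \<noteq> 0"
proof
  assume "q = 0"
  then have "q ^ 1 = q ^ 2" by simp
  with injD[OF assms] show False by fastforce
qed

lemma one_minus_power_nonzero:
  fixes q :: "'a::idom"
  assumes "inj ((^) q)" and "a \<noteq> 0"
  shows "1 - q ^ a \<noteq> 0"
  using injD[OF assms(1), of a 0] assms(2) by auto

lemma one_minus_power_ratio_nonzero: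
  fixes q :: "'a::field"
  assumes "inj ((^) q)" and "a \<noteq> b"
  shows "1 - q ^ a / q ^ b \<noteq> 0"
  using injD[OF assms(1), of a b] assms(2) power_inj_imp_nonzero[OF assms(1)] by auto

definition qpochp :: "complex \<Rightarrow> nat \<Rightarrow> nat \<Rightarrow> nat \<Rightarrow> complex" where
  "qpochp q a b k = qpoch (q ^ a / q ^ b) q k"

lemma qpochp_0 [simp]: "qpochp q a b 0 = 1"
  by (simp add: qpochp_def)

lemma qpochp_Suc: "qpochp q a b (Suc k) = qpochp q a b k * (1 - q ^ (a + k) / q ^ b)"
  by (simp add: qpochp_def qpoch_Suc power_add)

lemma qpochp_Suc_shift: "qpochp q a b (Suc k) = (1 - q ^ a / q ^ b) * qpochp q (Suc a) b k"
  by (simp add: qpochp_def qpoch_Suc_shift mult.commute)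

lemma qpochp_add: "qpochp q a b (m + n) = qpochp q a b m * qpochp q (a + m) b n"
  by (simp add: qpochp_def qpoch_add power_add)

lemma qpochp_Suc_Suc: "q \<noteq> 0 \<Longrightarrow> qpochp q (Suc a) (Suc b) k = qpochp q a b k"
  by (simp add: qpochp_def)

lemma qpochp_add2: "q \<noteq> 0 \<Longrightarrow> 2 \<le> d \<Longrightarrow> qpochp q n (d - 2) k = qpochp q (n + 2) d k"
  using qpochp_Suc_Suc[of q "Suc n" "Suc (d - 2)" k] qpochp_Suc_Suc[of q n "d - 2" k]
  by (simp add: numeral_2_eq_2 Suc_diff_Suc)

lemma qpochp_eq_0: "q \<noteq> 0 \<Longrightarrow> a \<le> b \<Longrightarrow> b < a + k \<Longrightarrow> qpochp q a b k = 0"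
  unfolding qpochp_def qpoch_def
  by (rule prod_zero) (auto intro!: bexI[of _ "b - a"] simp: power_add[symmetric])

lemma qpochp_nonzero:
  assumes qinj: "inj ((^) q)" and avoid: "\<And>j. j < k \<Longrightarrow> a + j \<noteq> b"
  shows "qpochp q a b k \<noteq> 0"
  unfolding qpochp_def qpoch_def
proof (subst prod_zero_iff, simp, safe)
  fix j assume "j < k" and "1 - q ^ a / q ^ b * q ^ j = 0"
  then have "q ^ (a + j) = q ^ b"
    using power_inj_imp_nonzero[OF qinj] by (simp add: power_add field_simps)
  with injD[OF qinj] avoid \<open>j < k\<close> show False by blast
qed

lemma qpochp_0_Suc_mult:
  "q \<noteq> 0 \<Longrightarrow> qpochp q 0 (Suc n) m * (1 - q ^ m / q ^ Suc n) = (1 - 1 / q ^ Suc n) * qpochp q 0 n m"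
  using qpochp_Suc[of q 0 "Suc n" m] qpochp_Suc_shift[of q 0 "Suc n" m] qpochp_Suc_Suc[of q 0 n m]
  by simp

lemma qpoch_inverse_power: "qpoch (inverse (q ^ d)) q k = qpochp q 0 d k"
  by (simp add: qpochp_def divide_inverse)

lemma qpoch_q: "qpoch q q k = qpochp q 1 0 k"
  by (simp add: qpochp_def)

definition ubasis :: "complex \<Rightarrow> complex \<Rightarrow> complex \<Rightarrow> nat \<Rightarrow> complex" where
  "ubasis q t \<eta> n = qpoch (t / \<eta>) q n * qpoch (t * \<eta>) q n"

definition hcoeff :: "complex \<Rightarrow> complex \<Rightarrow> nat \<Rightarrow> nat \<Rightarrow> nat \<Rightarrow> complex" where
  "hcoeff q t d i n = inverse (t ^ i) * qpochp q n d (i - n) * qpochp q 0 i n * q ^ n / qpochp q 1 0 n"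

lemma hcoeff_eq_0: "q \<noteq> 0 \<Longrightarrow> i < n \<Longrightarrow> hcoeff q t d i n = 0"
  unfolding hcoeff_def using qpochp_eq_0[of q 0 i n] by simp

lemma hpoly_ubasis_expansion:
  assumes qinj: "inj ((^) q)" and "i \<le> d"
  shows "hpoly q t d \<eta> i = (\<Sum>n\<le>i. hcoeff q t d i n * ubasis q t \<eta> n)"
  unfolding hpoly_def phi32_term_def sum_distrib_left
proof (rule sum.cong[OF refl])
  fix n assume "n \<in> {..i}"
  then have ni: "n \<le> i" by simp
  have split: "qpochp q 0 d i = qpochp q 0 d n * qpochp q n d (i - n)"
    using qpochp_add[of q 0 d n "i - n"] ni by simp
  have "qpochp q 0 d n \<noteq> 0"
    by (rule qpochp_nonzero[OF qinj]) (use ni assms(2) in auto)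
  then show "qpoch (inverse (q ^ d)) q i / t ^ i *
        (qpoch (inverse (q ^ i)) q n * qpoch (t / \<eta>) q n * qpoch (t * \<eta>) q n /
         (qpoch 0 q n * qpoch (inverse (q ^ d)) q n) * q ^ n / qpoch q q n) =
        hcoeff q t d i n * ubasis q t \<eta> n"
    unfolding qpoch_inverse_power qpoch_q hcoeff_def ubasis_def split qpoch_zero_base
    by (simp add: field_simps)
qed

lemma sum_atMost_extend:
  fixes f :: "nat \<Rightarrow> 'a::comm_monoid_add"
  assumes "\<And>n. i < n \<Longrightarrow> f n = 0" and "i \<le> N"
  shows "(\<Sum>n\<le>i. f n) = (\<Sum>n\<le>N. f n)"
  by (rule sum.mono_neutral_left) (use assms in \<open>auto simp: not_le\<close>)

lemma sum_atMost_single: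
  fixes f :: "nat \<Rightarrow> 'a::comm_monoid_add"
  assumes "k \<le> N" and "\<And>n. n \<noteq> k \<Longrightarrow> f n = 0"
  shows "(\<Sum>n\<le>N. f n) = f k"
  using assms by (subst sum.remove[of _ k]) (auto intro: sum.neutral)

lemma sum_atMost_shift_Suc:
  fixes f :: "nat \<Rightarrow> 'a::comm_monoid_add"
  assumes "f 0 = 0" and "f (Suc N) = 0"
  shows "(\<Sum>n\<le>N. f n) = (\<Sum>n\<le>N. f (Suc n))"
  using sum.atMost_Suc_shift[of f N] sum.atMost_Suc[of f N] assms by simp

lemma ubasis_Suc: "ubasis q t \<eta> (Suc n) = ubasis q t \<eta> n * ((1 - t * q ^ n / \<eta>) * (1 - t * q ^ n * \<eta>))"
  by (simp add: ubasis_def qpoch_Suc mult_ac)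

lemma ubasis_Suc_shift:
  assumes "\<eta> \<noteq> 0"
  shows "ubasis q \<tau> \<eta> (Suc n) = (1 - \<tau> * (\<eta> + inverse \<eta>) + \<tau>\<^sup>2) * ubasis q (\<tau> * q) \<eta> n"
proof -
  have "\<tau> / \<eta> * q = \<tau> * q / \<eta>" "\<tau> * \<eta> * q = \<tau> * q * \<eta>" by (simp_all add: mult_ac)
  then show ?thesis unfolding ubasis_def qpoch_Suc_shift using assms
    by (simp add: field_simps power2_eq_square)
qed

lemma ubasis_rebase:
  assumes "\<eta> \<noteq> 0" and "q \<noteq> 0"
  shows "ubasis q \<tau> \<eta> n = ubasis q (\<tau> * q) \<eta> n / q ^ n
      + (1 - 1 / q ^ n) * (1 - \<tau>\<^sup>2 * q ^ n) * ubasis q (\<tau> * q) \<eta> (n - 1)"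
proof (cases n)
  case (Suc k)
  show ?thesis unfolding Suc ubasis_Suc_shift[OF assms(1), of q \<tau> k] ubasis_Suc[of q "\<tau> * q" \<eta> k]
    using assms by (simp add: field_simps power2_eq_square)
qed (simp add: ubasis_def)

lemma ubasis_mult_eta_sum:
  assumes "\<eta> \<noteq> 0" and "q \<noteq> 0" and "\<tau> \<noteq> 0"
  shows "(\<eta> + inverse \<eta>) * ubasis q (\<tau> * q) \<eta> n =
     ((1 + \<tau>\<^sup>2 * q ^ (2 * n + 2)) * ubasis q (\<tau> * q) \<eta> n - ubasis q (\<tau> * q) \<eta> (Suc n)) / (\<tau> * q ^ Suc n)"
  unfolding ubasis_Suc[of q "\<tau> * q" \<eta> n] using assms
  by (simp add: field_simps power2_eq_square power_add power_mult)

text \<open>\<open>rebase_coeff q \<tau> a\<close> and \<open>mult_coeff q \<tau> b\<close> are the coefficients of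
  \<open>\<Sum> a\<^sub>n u\<^sub>n(\<tau>)\<close> and of \<open>x \<Sum> b\<^sub>n u\<^sub>n(\<tau>q)\<close> in the basis \<open>u\<^sub>n(\<tau>q)\<close>.\<close>

definition rebase_coeff :: "complex \<Rightarrow> complex \<Rightarrow> (nat \<Rightarrow> complex) \<Rightarrow> nat \<Rightarrow> complex" where
  "rebase_coeff q \<tau> a m = a m / q ^ m + a (Suc m) * (1 - 1 / q ^ Suc m) * (1 - \<tau>\<^sup>2 * q ^ Suc m)"

lemma sum_ubasis_rebase:
  assumes "\<eta> \<noteq> 0" and "q \<noteq> 0" and "a (Suc N) = 0"
  shows "(\<Sum>n\<le>N. a n * ubasis q \<tau> \<eta> n) = (\<Sum>m\<le>N. rebase_coeff q \<tau> a m * ubasis q (\<tau> * q) \<eta> m)"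
proof -
  define g where "g n = a n * ((1 - 1 / q ^ n) * (1 - \<tau>\<^sup>2 * q ^ n) * ubasis q (\<tau> * q) \<eta> (n - 1))" for n
  have "(\<Sum>n\<le>N. a n * ubasis q \<tau> \<eta> n) = (\<Sum>n\<le>N. a n * (ubasis q (\<tau> * q) \<eta> n / q ^ n) + g n)"
    using ubasis_rebase[OF assms(1,2), of \<tau>] unfolding g_def by (simp only: distrib_left)
  also have "\<dots> = (\<Sum>n\<le>N. a n * (ubasis q (\<tau> * q) \<eta> n / q ^ n)) + (\<Sum>n\<le>N. g n)"
    by (rule sum.distrib)
  also have "(\<Sum>n\<le>N. g n) = (\<Sum>n\<le>N. g (Suc n))"
    by (rule sum_atMost_shift_Suc) (simp_all add: g_def assms(3))
  also have "(\<Sum>n\<le>N. a n * (ubasis q (\<tau> * q) \<eta> n / q ^ n)) + (\<Sum>n\<le>N. g (Suc n))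
      = (\<Sum>n\<le>N. a n * (ubasis q (\<tau> * q) \<eta> n / q ^ n) + g (Suc n))"
    by (rule sum.distrib[symmetric])
  also have "\<dots> = (\<Sum>m\<le>N. rebase_coeff q \<tau> a m * ubasis q (\<tau> * q) \<eta> m)"
  proof (rule sum.cong[OF refl])
    fix m
    show "a m * (ubasis q (\<tau> * q) \<eta> m / q ^ m) + g (Suc m) =
      rebase_coeff q \<tau> a m * ubasis q (\<tau> * q) \<eta> m"
      unfolding g_def rebase_coeff_def by (simp add: algebra_simps)
  qed
  finally show ?thesis .
qed

definition shift_seq :: "(nat \<Rightarrow> complex) \<Rightarrow> nat \<Rightarrow> complex" where
  "shift_seq b m = (case m of 0 \<Rightarrow> 0 | Suc k \<Rightarrow> b k)"

definition mult_coeff :: "complex \<Rightarrow> complex \<Rightarrow> (nat \<Rightarrow> complex) \<Rightarrow> nat \<Rightarrow> complex" where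
  "mult_coeff q \<tau> b m = b m * (1 + \<tau>\<^sup>2 * q ^ (2 * m + 2)) / (\<tau> * q ^ Suc m) - shift_seq b m / (\<tau> * q ^ m)"

lemma sum_ubasis_mult_eta_sum:
  assumes "\<eta> \<noteq> 0" and "q \<noteq> 0" and "\<tau> \<noteq> 0" and "b N = 0"
  shows "(\<eta> + inverse \<eta>) * (\<Sum>n\<le>N. b n * ubasis q (\<tau> * q) \<eta> n) =
    (\<Sum>m\<le>N. mult_coeff q \<tau> b m * ubasis q (\<tau> * q) \<eta> m)"
proof -
  define g where "g m = shift_seq b m / (\<tau> * q ^ m) * ubasis q (\<tau> * q) \<eta> m" for m
  define f where "f m = b m * (1 + \<tau>\<^sup>2 * q ^ (2 * m + 2)) / (\<tau> * q ^ Suc m) * ubasis q (\<tau> * q) \<eta> m" for m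
  have "(\<eta> + inverse \<eta>) * (\<Sum>n\<le>N. b n * ubasis q (\<tau> * q) \<eta> n) = (\<Sum>n\<le>N. f n - g (Suc n))"
    unfolding sum_distrib_left
  proof (rule sum.cong[OF refl])
    fix n
    have "(\<eta> + inverse \<eta>) * (b n * ubasis q (\<tau> * q) \<eta> n) = b n * ((\<eta> + inverse \<eta>) * ubasis q (\<tau> * q) \<eta> n)"
      by (simp only: mult_ac)
    also have "\<dots> = f n - g (Suc n)"
      unfolding ubasis_mult_eta_sum[OF assms(1-3)] f_def g_def shift_seq_def nat.case
      using assms(1-3) by (simp add: field_simps)
    finally show "(\<eta> + inverse \<eta>) * (b n * ubasis q (\<tau> * q) \<eta> n) = f n - g (Suc n)" .
  qed
  also have "\<dots> = (\<Sum>n\<le>N. f n) - (\<Sum>n\<le>N. g (Suc n))" by (rule sum_subtractf)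
  also have "(\<Sum>n\<le>N. g (Suc n)) = (\<Sum>n\<le>N. g n)"
    by (rule sum_atMost_shift_Suc[symmetric]) (simp_all add: g_def shift_seq_def assms(4))
  also have "(\<Sum>n\<le>N. f n) - (\<Sum>n\<le>N. g n) = (\<Sum>n\<le>N. f n - g n)"
    by (rule sum_subtractf[symmetric])
  also have "\<dots> = (\<Sum>m\<le>N. mult_coeff q \<tau> b m * ubasis q (\<tau> * q) \<eta> m)"
    unfolding f_def g_def mult_coeff_def by (simp add: algebra_simps)
  finally show ?thesis .
qed

definition hperp_coeff :: "complex \<Rightarrow> complex \<Rightarrow> nat \<Rightarrow> nat \<Rightarrow> nat \<Rightarrow> complex" where
  "hperp_coeff q \<tau> D j n = inverse ((\<tau> * q) ^ j) * qpochp q (n + 2) D (j - n) * qpochp q 0 j n * q ^ n / qpochp q 1 0 n"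

lemma hperp_coeff_eq_0: "q \<noteq> 0 \<Longrightarrow> j < n \<Longrightarrow> hperp_coeff q \<tau> D j n = 0"
  unfolding hperp_coeff_def using qpochp_eq_0[of q 0 j n] by simp

lemma hD_0: "hD q D \<tau> \<eta> 0 = 1"
  by (simp add: hD_def hpoly_def phi32_term_def)

lemma sum_lincomb3:
  fixes f g h u :: "nat \<Rightarrow> complex"
  shows "a * (\<Sum>m\<le>N. f m * u m) + b * (\<Sum>m\<le>N. g m * u m) + c * (\<Sum>m\<le>N. h m * u m)
    = (\<Sum>m\<le>N. (a * f m + b * g m + c * h m) * u m)"
  by (simp add: sum_distrib_left sum.distrib algebra_simps)

definition pperp_at :: "complex \<Rightarrow> complex \<Rightarrow> complex \<Rightarrow> complex" where
  "pperp_at E \<tau> \<eta> = inverse \<eta> * (\<eta> - \<tau>) * (\<eta> - inverse \<tau> * inverse E)"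

text \<open>The two contiguous relations, with \<open>E = q\<^sup>D\<close>, \<open>Q = q\<^sup>i\<close>, \<open>h = h\<^sub>i\<close> (resp.
  \<open>h\<^sub>i\<^sub>+\<^sub>1\<close> for \<open>rel_next\<close>), \<open>H = h\<^sup>\<perp>\<^sub>i\<close> and \<open>Hm = h\<^sup>\<perp>\<^sub>i\<^sub>-\<^sub>1\<close>.\<close>

definition rel_same :: "complex \<Rightarrow> complex \<Rightarrow> complex \<Rightarrow> complex \<Rightarrow> complex \<Rightarrow> complex \<Rightarrow> complex \<Rightarrow> bool" where
  "rel_same E \<tau> \<eta> Q h H Hm \<longleftrightarrow> (1 - Q / E) * h = (1 - 1 / E) * H + (1 - Q) * ((\<eta> + inverse \<eta>) / E - (\<tau> + inverse \<tau> / E)) * Hm"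

definition rel_next :: "complex \<Rightarrow> complex \<Rightarrow> complex \<Rightarrow> complex \<Rightarrow> complex \<Rightarrow> complex \<Rightarrow> complex \<Rightarrow> bool" where
  "rel_next E \<tau> \<eta> Q h1 H Hm \<longleftrightarrow> h1 = ((\<eta> + inverse \<eta>) - (\<tau> + inverse \<tau> / E)) * H - (1 - 1 / E) * (1 - Q) * Hm"

lemma eta_ellm_algebra:
  fixes q \<tau> \<eta> E Q :: complex
  assumes nz: "q \<noteq> 0" "\<tau> \<noteq> 0" "\<eta> \<noteq> 0" "E \<noteq> 0"
    and r1: "rel_same E \<tau> \<eta> Q hi H0 Hm1" and r3: "rel_next E \<tau> \<eta> Q hi1 H0 Hm1"
  shows "\<eta> * ((E - Q) * hi - (1 - Q) * pperp_at E \<tau> \<eta> * Hm1) =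
      (\<tau> * E + inverse \<tau>) * (Q / E - 1) * (- (hi - pperp_at E \<tau> \<eta> * Hm1) * (1 - Q))
    + (\<tau> * E + inverse \<tau>) * (Q / E) * ((E - Q) * hi - (1 - Q) * pperp_at E \<tau> \<eta> * Hm1)
    + \<tau> * (E - q * Q + 1) * (- (hi1 - pperp_at E \<tau> \<eta> * H0) / \<tau>)
    + \<tau> * (((E - q * Q) * hi1 - (1 - q * Q) * pperp_at E \<tau> \<eta> * H0) / \<tau>)"
proof -
  have e3: "hi1 = ((\<eta> + inverse \<eta>) - (\<tau> + inverse \<tau> / E)) * H0 - (1 - 1 / E) * (1 - Q) * Hm1"
    using r3 unfolding rel_next_def .
  show ?thesis using nz r1 unfolding e3 rel_same_def pperp_at_def
    by (simp add: field_simps) algebra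
qed

lemma inv_eta_ellm_algebra:
  fixes q \<tau> \<eta> E Q :: complex
  assumes nz: "q \<noteq> 0" "\<tau> \<noteq> 0" "\<eta> \<noteq> 0" "E \<noteq> 0"
    and r1: "rel_same E \<tau> \<eta> Q hi H0 Hm1" and r3: "rel_next E \<tau> \<eta> Q hi1 H0 Hm1"
    and r1m: "rel_same E \<tau> \<eta> (Q / q) hm1 Hm1 Hm2" and r3m: "rel_next E \<tau> \<eta> (Q / q) hi Hm1 Hm2"
  shows "inverse \<eta> * ((E - Q) * hi - (1 - Q) * pperp_at E \<tau> \<eta> * Hm1) =
      inverse \<tau> * (1 - Q / E) * (\<tau> * (1 - Q) * ((E - Q / q) * hm1 - (1 - Q / q) * pperp_at E \<tau> \<eta> * Hm2))
    + (\<tau> * E + inverse \<tau>) * (1 - Q / E) * (- (hi - pperp_at E \<tau> \<eta> * Hm1) * (1 - Q))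
    - \<tau> * (E - Q + 1) * (- (hi1 - pperp_at E \<tau> \<eta> * H0) / \<tau>)"
proof -
  have e3: "hi1 = ((\<eta> + inverse \<eta>) - (\<tau> + inverse \<tau> / E)) * H0 - (1 - 1 / E) * (1 - Q) * Hm1"
    using r3 unfolding rel_next_def .
  have e3m: "hi = ((\<eta> + inverse \<eta>) - (\<tau> + inverse \<tau> / E)) * Hm1 - (1 - 1 / E) * (1 - Q / q) * Hm2"
    using r3m unfolding rel_next_def .
  show ?thesis using nz r1 r1m unfolding e3 unfolding e3m rel_same_def pperp_at_def
    by (simp add: field_simps) algebra
qed

lemma eta_ellp_algebra:
  fixes q \<tau> \<eta> E Q :: complex
  assumes nz: "q \<noteq> 0" "\<tau> \<noteq> 0" "\<eta> \<noteq> 0" "E \<noteq> 0"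
    and r1: "rel_same E \<tau> \<eta> Q hi H0 Hm1" and r3: "rel_next E \<tau> \<eta> Q hi1 H0 Hm1"
  shows "\<eta> * (- (hi1 - pperp_at E \<tau> \<eta> * H0) / \<tau>) =
      inverse \<tau> * (1 - Q / E) * (- (hi - pperp_at E \<tau> \<eta> * Hm1) * (1 - Q))
    - inverse \<tau> * (Q / E) * ((E - Q) * hi - (1 - Q) * pperp_at E \<tau> \<eta> * Hm1)"
proof -
  have e3: "hi1 = ((\<eta> + inverse \<eta>) - (\<tau> + inverse \<tau> / E)) * H0 - (1 - 1 / E) * (1 - Q) * Hm1"
    using r3 unfolding rel_next_def .
  show ?thesis using nz r1 unfolding e3 rel_same_def pperp_at_def
    by (simp add: field_simps) algebra
qed

lemma inv_eta_ellp_algebra: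
  fixes q \<tau> \<eta> E Q :: complex
  assumes nz: "q \<noteq> 0" "\<tau> \<noteq> 0" "\<eta> \<noteq> 0" "E \<noteq> 0"
    and r1: "rel_same E \<tau> \<eta> Q hi H0 Hm1" and r3: "rel_next E \<tau> \<eta> Q hi1 H0 Hm1"
    and r1p: "rel_same E \<tau> \<eta> (q * Q) hi1 Hp1 H0" and r3p: "rel_next E \<tau> \<eta> (q * Q) hi2 Hp1 H0"
  shows "inverse \<eta> * (- (hi1 - pperp_at E \<tau> \<eta> * H0) / \<tau>) =
      inverse \<tau> * (q * Q / E) * ((E - Q) * hi - (1 - Q) * pperp_at E \<tau> \<eta> * Hm1)
    + (\<tau> * E + inverse \<tau>) * (q * Q / E) * (- (hi1 - pperp_at E \<tau> \<eta> * H0) / \<tau>)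
    + \<tau> * (- (hi2 - pperp_at E \<tau> \<eta> * Hp1) / \<tau>\<^sup>2)"
proof -
  have e3: "hi1 = ((\<eta> + inverse \<eta>) - (\<tau> + inverse \<tau> / E)) * H0 - (1 - 1 / E) * (1 - Q) * Hm1"
    using r3 unfolding rel_next_def .
  have e3p: "hi2 = ((\<eta> + inverse \<eta>) - (\<tau> + inverse \<tau> / E)) * Hp1 - (1 - 1 / E) * (1 - q * Q) * H0"
    using r3p unfolding rel_next_def .
  show ?thesis using nz r1 r1p unfolding e3p unfolding e3 rel_same_def pperp_at_def
    by (simp add: field_simps power2_eq_square) algebra
qed

lemma inv_eta_ellp_algebra_top:
  fixes q \<tau> \<eta> E Q :: complex
  assumes nz: "q \<noteq> 0" "\<tau> \<noteq> 0" "\<eta> \<noteq> 0" "E \<noteq> 0" and top: "E = q * Q"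
    and r1: "rel_same E \<tau> \<eta> Q hi H0 Hm1" and r3: "rel_next E \<tau> \<eta> Q hi1 H0 Hm1"
  shows "inverse \<eta> * (- (hi1 - pperp_at E \<tau> \<eta> * H0) / \<tau>) =
      inverse \<tau> * (q * Q / E) * ((E - Q) * hi - (1 - Q) * pperp_at E \<tau> \<eta> * Hm1)
    + (\<tau> * E + inverse \<tau>) * (q * Q / E) * (- (hi1 - pperp_at E \<tau> \<eta> * H0) / \<tau>)
    + \<tau> * (- (E - 1) * inverse \<eta> * pperp_at E \<tau> \<eta> * H0 / \<tau>\<^sup>2)"
proof -
  have e3: "hi1 = ((\<eta> + inverse \<eta>) - (\<tau> + inverse \<tau> / E)) * H0 - (1 - 1 / E) * (1 - Q) * Hm1"
    using r3 unfolding rel_next_def .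
  show ?thesis using nz r1 unfolding e3 rel_same_def pperp_at_def top
    by (simp add: field_simps power2_eq_square) algebra
qed
lemma inv_eta_ellm_algebra_0:
  fixes \<tau> \<eta> E :: complex
  assumes nz: "\<tau> \<noteq> 0" "\<eta> \<noteq> 0" "E \<noteq> 0"
    and r1: "rel_same E \<tau> \<eta> 1 hi H0 Hm1" and r3: "rel_next E \<tau> \<eta> 1 hi1 H0 Hm1"
  shows "inverse \<eta> * ((E - 1) * hi - (1 - 1) * pperp_at E \<tau> \<eta> * Hm1) =
      inverse \<tau> * (1 - 1 / E) * 0
    + (\<tau> * E + inverse \<tau>) * (1 - 1 / E) * (- (hi - pperp_at E \<tau> \<eta> * Hm1) * (1 - 1))
    - \<tau> * (E - 1 + 1) * (- (hi1 - pperp_at E \<tau> \<eta> * H0) / \<tau>)"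
proof -
  have e3: "hi1 = ((\<eta> + inverse \<eta>) - (\<tau> + inverse \<tau> / E)) * H0 - (1 - 1 / E) * (1 - 1) * Hm1"
    using r3 unfolding rel_next_def .
  show ?thesis using nz r1 unfolding e3 rel_same_def pperp_at_def
    by (simp add: field_simps) algebra
qed

text \<open>Multiplying \<open>\<ell>\<^sup>\<plusminus>\<^sub>i\<close> by \<open>ell_norm\<close> clears all denominators of their definitions.\<close>

definition ell_norm :: "complex \<Rightarrow> nat \<Rightarrow> complex \<Rightarrow> nat \<Rightarrow> complex" where
  "ell_norm q D \<tau> i = \<tau> ^ i * (q ^ D - 1) * qpoch q q i"

lemma ell_norm_Suc: "ell_norm q D \<tau> (Suc i) = ell_norm q D \<tau> i * \<tau> * (1 - q ^ Suc i)"
  by (simp add: ell_norm_def qpoch_Suc mult_ac)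

lemma pperp_eq_pperp_at: "pperp q D \<tau> \<eta> = pperp_at (q ^ D) \<tau> \<eta>"
  by (simp add: pperp_def pperp_at_def)

lemma ell_minus_one [simp]:
  "ellm q D \<tau> \<eta> (-1) = 0" "ellp q D \<tau> \<eta> (-1) = 0" "hperp q D \<tau> \<eta> (-1) = 0"
  by (simp_all add: ellm_def ellp_def hperp_def)

locale dual_q_krawtchouk =
  fixes q \<tau> :: complex and D :: nat
  assumes q_power_inj: "inj ((^) q)" and tau_nonzero: "\<tau> \<noteq> 0" and D_ge_3: "3 \<le> D"
begin

lemma q_nonzero: "q \<noteq> 0"
  using power_inj_imp_nonzero[OF q_power_inj] .

lemma hD_ubasis_expansion:
  assumes "i \<le> D" and "i \<le> N"
  shows "hD q D \<tau> \<eta> i = (\<Sum>n\<le>N. hcoeff q \<tau> D i n * ubasis q \<tau> \<eta> n)"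
proof -
  have "hD q D \<tau> \<eta> i = (\<Sum>n\<le>i. hcoeff q \<tau> D i n * ubasis q \<tau> \<eta> n)"
    unfolding hD_def by (rule hpoly_ubasis_expansion[OF q_power_inj assms(1)])
  also have "\<dots> = (\<Sum>n\<le>N. hcoeff q \<tau> D i n * ubasis q \<tau> \<eta> n)"
    by (rule sum_atMost_extend) (use assms hcoeff_eq_0[OF q_nonzero] in auto)
  finally show ?thesis .
qed

lemma hperp_ubasis_expansion_low:
  assumes j: "j \<le> D - 2"
  shows "hperp q D \<tau> \<eta> (int j) = (\<Sum>n\<le>j. hperp_coeff q \<tau> D j n * ubasis q (\<tau> * q) \<eta> n)"
proof -
  have "hperp q D \<tau> \<eta> (int j) = hpoly q (\<tau> * q) (D - 2) \<eta> j"
    unfolding hperp_def using D_ge_3 j by auto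
  also have "\<dots> = (\<Sum>n\<le>j. hcoeff q (\<tau> * q) (D - 2) j n * ubasis q (\<tau> * q) \<eta> n)"
    by (rule hpoly_ubasis_expansion[OF q_power_inj j])
  also have "\<dots> = (\<Sum>n\<le>j. hperp_coeff q \<tau> D j n * ubasis q (\<tau> * q) \<eta> n)"
    unfolding hcoeff_def hperp_coeff_def using qpochp_add2[OF q_nonzero] D_ge_3 by simp
  finally show ?thesis .
qed

lemma hperp_top_product:
  assumes e: "\<eta> \<noteq> 0"
  shows "inverse (\<eta> ^ N) * (\<Prod>n\<in>{1..N}. (\<eta> - \<tau> * q ^ n) * (\<eta> - inverse \<tau> * inverse (q ^ n)))
     = inverse ((\<tau> * q) ^ N) * qpochp q 0 N N * q ^ N / qpochp q 1 0 N * ubasis q (\<tau> * q) \<eta> N"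
proof (induction N)
  case 0
  then show ?case by (simp add: ubasis_def)
next
  case (Suc N)
  have nz: "qpochp q 1 0 N \<noteq> 0" by (rule qpochp_nonzero[OF q_power_inj]) auto
  have nz1: "1 - q ^ Suc N \<noteq> 0"
    using one_minus_power_nonzero[OF q_power_inj, of "Suc N"] by simp
  have a: "qpochp q 0 (Suc N) (Suc N) = (1 - 1 / q ^ Suc N) * qpochp q 0 N N"
    using qpochp_Suc_shift[of q 0 "Suc N" N] qpochp_Suc_Suc[OF q_nonzero, of 0 N N] by simp
  have b: "qpochp q 1 0 (Suc N) = qpochp q 1 0 N * (1 - q ^ Suc N)"
    by (simp add: qpochp_Suc)
  have c: "ubasis q (\<tau> * q) \<eta> (Suc N) = ubasis q (\<tau> * q) \<eta> N * ((1 - \<tau> * q ^ Suc N / \<eta>) * (1 - \<tau> * q ^ Suc N * \<eta>))"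
    by (simp add: ubasis_def qpoch_Suc mult_ac)
  have p: "(\<Prod>n\<in>{1..Suc N}. (\<eta> - \<tau> * q ^ n) * (\<eta> - inverse \<tau> * inverse (q ^ n))) =
     (\<Prod>n\<in>{1..N}. (\<eta> - \<tau> * q ^ n) * (\<eta> - inverse \<tau> * inverse (q ^ n))) *
      ((\<eta> - \<tau> * q ^ Suc N) * (\<eta> - inverse \<tau> * inverse (q ^ Suc N)))"
    by (simp add: prod.cl_ivl_Suc)
  have "inverse (\<eta> ^ Suc N) * (\<Prod>n\<in>{1..Suc N}. (\<eta> - \<tau> * q ^ n) * (\<eta> - inverse \<tau> * inverse (q ^ n)))
    = (inverse (\<eta> ^ N) * (\<Prod>n\<in>{1..N}. (\<eta> - \<tau> * q ^ n) * (\<eta> - inverse \<tau> * inverse (q ^ n))))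
      * ((\<eta> - \<tau> * q ^ Suc N) * (\<eta> - inverse \<tau> * inverse (q ^ Suc N)) / \<eta>)"
    unfolding p by (simp add: field_simps)
  also have "\<dots> = inverse ((\<tau> * q) ^ N) * qpochp q 0 N N * q ^ N / qpochp q 1 0 N * ubasis q (\<tau> * q) \<eta> N
      * ((\<eta> - \<tau> * q ^ Suc N) * (\<eta> - inverse \<tau> * inverse (q ^ Suc N)) / \<eta>)"
    unfolding Suc.IH ..
  also have "\<dots> = inverse ((\<tau> * q) ^ Suc N) * qpochp q 0 (Suc N) (Suc N) * q ^ Suc N / qpochp q 1 0 (Suc N) * ubasis q (\<tau> * q) \<eta> (Suc N)"
    unfolding a b c using nz nz1 q_nonzero tau_nonzero e
    by (simp add: field_simps)
  finally show ?case .
qed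

lemma hperp_ubasis_expansion:
  assumes e: "\<eta> \<noteq> 0" and j: "j \<le> D - 1" and jN: "j \<le> N"
  shows "hperp q D \<tau> \<eta> (int j) = (\<Sum>n\<le>N. hperp_coeff q \<tau> D j n * ubasis q (\<tau> * q) \<eta> n)"
proof (cases "j \<le> D - 2")
  case True
  have "hperp q D \<tau> \<eta> (int j) = (\<Sum>n\<le>j. hperp_coeff q \<tau> D j n * ubasis q (\<tau> * q) \<eta> n)"
    by (rule hperp_ubasis_expansion_low[OF True])
  also have "\<dots> = (\<Sum>n\<le>N. hperp_coeff q \<tau> D j n * ubasis q (\<tau> * q) \<eta> n)"
    by (rule sum_atMost_extend) (use jN hperp_coeff_eq_0[OF q_nonzero] in auto)
  finally show ?thesis .
next
  case False
  hence jD: "j = D - 1" using j by simp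
  have "hperp q D \<tau> \<eta> (int j) = \<eta> powi (1 - int D) *
        (\<Prod>n\<in>{1..D-1}. (\<eta> - \<tau> * q ^ n) * (\<eta> - inverse \<tau> * inverse (q ^ n)))"
    unfolding hperp_def jD using D_ge_3 by auto
  also have "\<eta> powi (1 - int D) = inverse (\<eta> ^ (D - 1))"
  proof -
    have "1 - int D = - int (D - 1)" using D_ge_3 by simp
    hence "\<eta> powi (1 - int D) = \<eta> powi (- int (D - 1))" by (simp only:)
    thus ?thesis by (simp only: power_int_minus power_int_of_nat)
  qed
  also have "inverse (\<eta> ^ (D - 1)) * (\<Prod>n\<in>{1..D-1}. (\<eta> - \<tau> * q ^ n) * (\<eta> - inverse \<tau> * inverse (q ^ n)))
     = hperp_coeff q \<tau> D (D - 1) (D - 1) * ubasis q (\<tau> * q) \<eta> (D - 1)"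
    using hperp_top_product[OF e, of "D - 1"] by (simp add: hperp_coeff_def)
  also have "\<dots> = (\<Sum>n\<le>N. hperp_coeff q \<tau> D (D - 1) n * ubasis q (\<tau> * q) \<eta> n)"
  proof (rule sum_atMost_single[symmetric, of "D - 1" N "\<lambda>n. hperp_coeff q \<tau> D (D - 1) n * ubasis q (\<tau> * q) \<eta> n"])
    show "D - 1 \<le> N" using jN jD by simp
  next
    fix n assume n: "n \<noteq> D - 1"
    show "hperp_coeff q \<tau> D (D - 1) n * ubasis q (\<tau> * q) \<eta> n = 0"
    proof (cases "n < D - 1")
      case True
      have "qpochp q (n + 2) D (D - 1 - n) = 0" by (rule qpochp_eq_0[OF q_nonzero]) (use True in auto)
      thus ?thesis unfolding hperp_coeff_def by simp
    next
      case False
      thus ?thesis using n hperp_coeff_eq_0[OF q_nonzero, of "D - 1" n] by simp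
    qed
  qed
  finally show ?thesis unfolding jD .
qed

lemma rel_same_coeff_generic:
  assumes iD: "Suc (m + r) < D"
  shows "(1 - q ^ Suc (m + r) / q ^ D) * rebase_coeff q \<tau> (hcoeff q \<tau> D (Suc (m + r))) m
    = (1 - 1 / q ^ D) * hperp_coeff q \<tau> D (Suc (m + r)) m
      + (1 - q ^ Suc (m + r)) / q ^ D * mult_coeff q \<tau> (hperp_coeff q \<tau> D (m + r)) m
      - (1 - q ^ Suc (m + r)) * (\<tau> + inverse \<tau> / q ^ D) * hperp_coeff q \<tau> D (m + r) m"
proof -
  define E where "E = q ^ D"
  define M where "M = q ^ m"
  define P where "P = q ^ m * q ^ r"
  define T where "T = \<tau> ^ m * \<tau> ^ r"
  define F where "F = qpochp q 1 0 m"
  have E0: "E \<noteq> 0" and M0: "M \<noteq> 0" and P0: "P \<noteq> 0" and T0: "T \<noteq> 0"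
    using q_nonzero tau_nonzero by (simp_all add: E_def M_def P_def T_def)
  have F0: "F \<noteq> 0" unfolding F_def by (rule qpochp_nonzero[OF q_power_inj]) auto
  have nX: "1 - q * M / E \<noteq> 0"
    using one_minus_power_ratio_nonzero[OF q_power_inj, of "Suc m" D] iD by (simp add: M_def E_def)
  have nY: "1 - 1 / (q * P) \<noteq> 0"
    using one_minus_power_ratio_nonzero[OF q_power_inj, of 0 "Suc (m + r)"] by (simp add: P_def power_add)
  have nF: "1 - q * M \<noteq> 0"
    using one_minus_power_nonzero[OF q_power_inj, where a = "Suc m"] by (simp add: M_def)
  define X where "X = qpochp q (Suc m) D r / (1 - q * M / E)"
  define Y where "Y = qpochp q 0 (Suc (m + r)) m / (1 - 1 / (q * P))"
  have R1: "qpochp q (Suc m) D r = (1 - q * M / E) * X" unfolding X_def using nX by simp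
  have R3: "qpochp q 0 (Suc (m + r)) m = (1 - 1 / (q * P)) * Y" unfolding Y_def using nY by simp
  have R2: "qpochp q (m + 2) D r = (1 - q * P / E) * X"
  proof -
    have "qpochp q (Suc m) D (Suc r) = qpochp q (Suc m) D r * (1 - q * P / E)"
      by (simp add: qpochp_Suc P_def E_def power_add)
    moreover have "qpochp q (Suc m) D (Suc r) = (1 - q * M / E) * qpochp q (m + 2) D r"
      by (simp add: qpochp_Suc_shift M_def E_def)
    ultimately have "(1 - q * M / E) * qpochp q (m + 2) D r = (1 - q * M / E) * ((1 - q * P / E) * X)"
      unfolding R1 by (simp add: mult_ac)
    thus ?thesis using nX E0 by (simp add: numeral_2_eq_2)
  qed
  have R4: "qpochp q 0 (m + r) m = (1 - M / (q * P)) * Y"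
  proof -
    have "qpochp q 0 (Suc (m + r)) (Suc m) = qpochp q 0 (Suc (m + r)) m * (1 - M / (q * P))"
      by (simp add: qpochp_Suc P_def M_def power_add)
    moreover have "qpochp q 0 (Suc (m + r)) (Suc m) = (1 - 1 / (q * P)) * qpochp q 0 (m + r) m"
      using qpochp_Suc_shift[of q 0 "Suc (m + r)" m] qpochp_Suc_Suc[OF q_nonzero, of 0 "m + r" m] by (simp add: P_def power_add)
    ultimately have "(1 - 1 / (q * P)) * qpochp q 0 (m + r) m = (1 - 1 / (q * P)) * ((1 - M / (q * P)) * Y)"
      unfolding R3 by (simp add: mult_ac)
    thus ?thesis using nY q_nonzero P0 by auto
  qed
  have coeff_A: "hcoeff q \<tau> D (Suc (m + r)) m = inverse (\<tau> * T) * (1 - M / E) * (1 - q * M / E) * X * (1 - 1 / (q * P)) * Y * M / F"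
  proof -
    have "qpochp q m D (Suc (m + r) - m) = (1 - M / E) * qpochp q (Suc m) D r"
      using qpochp_Suc_shift[of q m D r] by (simp add: Suc_diff_le M_def E_def)
    thus ?thesis unfolding hcoeff_def R1 R3 F_def[symmetric]
      by (simp add: T_def M_def power_add mult_ac)
  qed
  have coeff_A_Suc: "hcoeff q \<tau> D (Suc (m + r)) (Suc m) * (1 - 1 / q ^ Suc m) =
      - inverse (\<tau> * T) * (1 - q * M / E) * X * (1 - 1 / (q * P)) * Y * (1 - M / (q * P)) / F"
  proof -
    have a: "qpochp q 0 (Suc (m + r)) (Suc m) = (1 - 1 / (q * P)) * Y * (1 - M / (q * P))"
      using R3 by (simp add: qpochp_Suc P_def M_def power_add)
    have b: "qpochp q 1 0 (Suc m) = F * (1 - q * M)" by (simp add: qpochp_Suc F_def M_def)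
    have c: "Suc (m + r) - Suc m = r" by simp
    have d: "q ^ Suc m = q * M" "\<tau> ^ Suc (m + r) = \<tau> * T" by (simp_all add: M_def T_def power_add)
    show ?thesis unfolding hcoeff_def a b c R1 d using F0 nF q_nonzero M0 E0 P0 T0 tau_nonzero
      by (simp add: field_simps)
  qed
  have coeff_B_Suc: "hperp_coeff q \<tau> D (Suc (m + r)) m = inverse (\<tau> * q * T * P) * (1 - q * P / E) * X * (1 - q * q * P / E) * (1 - 1 / (q * P)) * Y * M / F"
  proof -
    have "qpochp q (m + 2) D (Suc (m + r) - m) = (1 - q * P / E) * X * (1 - q * q * P / E)"
      using R2 by (simp add: Suc_diff_le qpochp_Suc P_def E_def power_add mult_ac)
    thus ?thesis unfolding hperp_coeff_def R3 F_def[symmetric]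
      by (simp add: T_def M_def P_def power_add power_mult_distrib mult_ac)
  qed
  have coeff_B: "hperp_coeff q \<tau> D (m + r) m = inverse (T * P) * (1 - q * P / E) * X * (1 - M / (q * P)) * Y * M / F"
    unfolding hperp_coeff_def R4 F_def[symmetric] using R2
    by (simp add: T_def M_def P_def power_add power_mult_distrib mult_ac)
  have coeff_B_shift: "shift_seq (hperp_coeff q \<tau> D (m + r)) m = inverse (T * P) * (1 - q * M / E) * (1 - q * P / E) * X * Y * (M / q) * (1 - M) / F"
  proof (cases m)
    case 0 then show ?thesis by (simp add: shift_seq_def M_def)
  next
    case (Suc k)
    have a: "qpochp q (k + 2) D (m + r - k) = (1 - q * M / E) * ((1 - q * P / E) * X)"
    proof -
      have "m + r - k = Suc r" using Suc by simp
      hence "qpochp q (k + 2) D (m + r - k) = (1 - q ^ (k + 2) / q ^ D) * qpochp q (m + 2) D r"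
        using qpochp_Suc_shift[of q "k + 2" D r] Suc by simp
      thus ?thesis unfolding R2 using Suc by (simp add: M_def E_def)
    qed
    have b: "qpochp q 0 (m + r) k = Y"
    proof -
      have "qpochp q 0 (Suc (m + r)) m = (1 - 1 / (q * P)) * qpochp q 0 (m + r) k"
        using qpochp_Suc_shift[of q 0 "Suc (m + r)" k] qpochp_Suc_Suc[OF q_nonzero, of 0 "m + r" k] Suc
        by (simp add: P_def power_add)
      thus ?thesis unfolding R3 using nY q_nonzero P0 by auto
    qed
    have nM: "1 - M \<noteq> 0" using one_minus_power_nonzero[OF q_power_inj, where a = m] Suc by (simp add: M_def)
    have c: "qpochp q 1 0 k = F / (1 - M)"
    proof -
      have "F = qpochp q 1 0 k * (1 - M)" unfolding F_def Suc by (simp add: qpochp_Suc M_def Suc)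
      thus ?thesis using nM by simp
    qed
    have d: "q ^ k = M / q" "(\<tau> * q) ^ (m + r) = T * P"
      using q_nonzero by (simp_all add: M_def Suc T_def P_def power_add power_mult_distrib)
    have cBk: "shift_seq (hperp_coeff q \<tau> D (m + r)) m = hperp_coeff q \<tau> D (m + r) k" by (simp add: shift_seq_def Suc)
    show ?thesis unfolding cBk hperp_coeff_def a b c d using q_nonzero tau_nonzero F0 nM E0 P0 T0 M0
      by (simp add: field_simps)
  qed
  have pw: "q ^ Suc (m + r) = q * P" "q ^ D = E" "q ^ Suc m = q * M" "q ^ m = M" "q ^ (2 * m + 2) = (q * M)\<^sup>2"
    by (simp_all add: P_def E_def M_def power_add power2_eq_square power_mult_distrib) (simp add: power_mult mult_ac power2_eq_square)
  show ?thesis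
    unfolding rebase_coeff_def mult_coeff_def coeff_A_Suc unfolding coeff_A coeff_B_Suc coeff_B coeff_B_shift pw
    using q_nonzero tau_nonzero M0 P0 E0 F0 T0 by (simp add: field_simps power2_eq_square)
qed

lemma rel_same_coeff_diag:
  assumes top: "m = Suc j"
  shows "(1 - q ^ Suc j / q ^ D) * rebase_coeff q \<tau> (hcoeff q \<tau> D (Suc j)) m
    = (1 - 1 / q ^ D) * hperp_coeff q \<tau> D (Suc j) m
      + (1 - q ^ Suc j) / q ^ D * mult_coeff q \<tau> (hperp_coeff q \<tau> D j) m
      - (1 - q ^ Suc j) * (\<tau> + inverse \<tau> / q ^ D) * hperp_coeff q \<tau> D j m"
proof -
  define E where "E = q ^ D"
  define P where "P = q ^ j"
  define T where "T = \<tau> ^ j"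
  define Y where "Y = qpochp q 0 j j"
  define F where "F = qpochp q 1 0 j"
  have E0: "E \<noteq> 0" and P0: "P \<noteq> 0" and T0: "T \<noteq> 0"
    using q_nonzero tau_nonzero by (simp_all add: E_def P_def T_def)
  have F0: "F \<noteq> 0" unfolding F_def by (rule qpochp_nonzero[OF q_power_inj]) auto
  have nF: "1 - q * P \<noteq> 0"
    using one_minus_power_nonzero[OF q_power_inj, where a = "Suc j"] by (simp add: P_def)
  have G: "qpochp q 0 (Suc j) (Suc j) = (1 - 1 / (q * P)) * Y"
    using qpochp_Suc_shift[of q 0 "Suc j" j] qpochp_Suc_Suc[OF q_nonzero, of 0 j j] by (simp add: Y_def P_def)
  have Fs: "qpochp q 1 0 (Suc j) = F * (1 - q * P)" by (simp add: qpochp_Suc F_def P_def)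
  have z: "hcoeff q \<tau> D (Suc j) (Suc m) = 0" "hperp_coeff q \<tau> D j m = 0"
    using top hcoeff_eq_0[OF q_nonzero] hperp_coeff_eq_0[OF q_nonzero] by auto
  have sB: "shift_seq (hperp_coeff q \<tau> D j) m = hperp_coeff q \<tau> D j j" by (simp add: shift_seq_def top)
  have pw: "q ^ Suc j = q * P" "\<tau> ^ Suc j = \<tau> * T" "(\<tau> * q) ^ Suc j = \<tau> * q * T * P"
    "(\<tau> * q) ^ j = T * P" "q ^ D = E" "q ^ j = P"
    by (simp_all add: P_def T_def E_def power_mult_distrib)
  show ?thesis unfolding rebase_coeff_def mult_coeff_def z sB unfolding top hcoeff_def hperp_coeff_def G Fs
    unfolding Y_def[symmetric] F_def[symmetric] pw using q_nonzero tau_nonzero E0 P0 T0 F0 nF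
    by (simp add: field_simps)
qed

lemma rel_same_coeff:
  assumes iD: "Suc j < D"
  shows "(1 - q ^ Suc j / q ^ D) * rebase_coeff q \<tau> (hcoeff q \<tau> D (Suc j)) m
    = (1 - 1 / q ^ D) * hperp_coeff q \<tau> D (Suc j) m
      + (1 - q ^ Suc j) / q ^ D * mult_coeff q \<tau> (hperp_coeff q \<tau> D j) m
      - (1 - q ^ Suc j) * (\<tau> + inverse \<tau> / q ^ D) * hperp_coeff q \<tau> D j m"
proof -
  consider (gen) "m \<le> j" | (top) "m = Suc j" | (big) "Suc j < m" by linarith
  then show ?thesis
  proof cases
    case gen
    then obtain r where r: "j = m + r" using le_Suc_ex by blast
    have mr: "Suc (m + r) < D" using iD r by simp
    show ?thesis unfolding r by (rule rel_same_coeff_generic[OF mr])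
  next
    case big
    have z: "hcoeff q \<tau> D (Suc j) m = 0" "hcoeff q \<tau> D (Suc j) (Suc m) = 0" "hperp_coeff q \<tau> D (Suc j) m = 0"
      "hperp_coeff q \<tau> D j m = 0" "shift_seq (hperp_coeff q \<tau> D j) m = 0"
      using big hcoeff_eq_0[OF q_nonzero] hperp_coeff_eq_0[OF q_nonzero] by (auto simp: shift_seq_def split: nat.split)
    show ?thesis unfolding rebase_coeff_def mult_coeff_def z by simp
  next
    case top
    show ?thesis by (rule rel_same_coeff_diag[OF top])
  qed
qed

lemma hD_hperp_rel_same:
  assumes e: "\<eta> \<noteq> 0" and iD: "Suc j < D"
  shows "(1 - q ^ Suc j / q ^ D) * hD q D \<tau> \<eta> (Suc j) =
     (1 - 1 / q ^ D) * hperp q D \<tau> \<eta> (int (Suc j))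
     + (1 - q ^ Suc j) * ((\<eta> + inverse \<eta>) / q ^ D - (\<tau> + inverse \<tau> / q ^ D)) * hperp q D \<tau> \<eta> (int j)"
proof -
  define u where "u = ubasis q (\<tau> * q) \<eta>"
  have h: "hD q D \<tau> \<eta> (Suc j) = (\<Sum>m\<le>D. rebase_coeff q \<tau> (hcoeff q \<tau> D (Suc j)) m * u m)"
    using hD_ubasis_expansion[of "Suc j" D \<eta>] iD unfolding u_def
    by (simp add: sum_ubasis_rebase[OF e q_nonzero] hcoeff_eq_0[OF q_nonzero])
  have H1: "hperp q D \<tau> \<eta> (int (Suc j)) = (\<Sum>m\<le>D. hperp_coeff q \<tau> D (Suc j) m * u m)"
    unfolding u_def by (rule hperp_ubasis_expansion[OF e]) (use iD in auto)
  have H0: "hperp q D \<tau> \<eta> (int j) = (\<Sum>m\<le>D. hperp_coeff q \<tau> D j m * u m)"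
    unfolding u_def by (rule hperp_ubasis_expansion[OF e]) (use iD in auto)
  have XH0: "(\<eta> + inverse \<eta>) * hperp q D \<tau> \<eta> (int j) = (\<Sum>m\<le>D. mult_coeff q \<tau> (hperp_coeff q \<tau> D j) m * u m)"
    unfolding H0 u_def using iD
    by (simp add: sum_ubasis_mult_eta_sum[OF e q_nonzero tau_nonzero] hperp_coeff_eq_0[OF q_nonzero])
  have "(1 - 1 / q ^ D) * hperp q D \<tau> \<eta> (int (Suc j))
     + (1 - q ^ Suc j) * ((\<eta> + inverse \<eta>) / q ^ D - (\<tau> + inverse \<tau> / q ^ D)) * hperp q D \<tau> \<eta> (int j)
     = (1 - 1 / q ^ D) * hperp q D \<tau> \<eta> (int (Suc j))
       + ((1 - q ^ Suc j) / q ^ D) * ((\<eta> + inverse \<eta>) * hperp q D \<tau> \<eta> (int j))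
       + (- (1 - q ^ Suc j) * (\<tau> + inverse \<tau> / q ^ D)) * hperp q D \<tau> \<eta> (int j)"
    using q_nonzero tau_nonzero e by (simp add: field_simps)
  also have "\<dots> = (\<Sum>m\<le>D. ((1 - 1 / q ^ D) * hperp_coeff q \<tau> D (Suc j) m
       + ((1 - q ^ Suc j) / q ^ D) * mult_coeff q \<tau> (hperp_coeff q \<tau> D j) m
       + (- (1 - q ^ Suc j) * (\<tau> + inverse \<tau> / q ^ D)) * hperp_coeff q \<tau> D j m) * u m)"
    unfolding XH0 unfolding H1 H0 by (rule sum_lincomb3)
  also have "\<dots> = (\<Sum>m\<le>D. (1 - q ^ Suc j / q ^ D) * rebase_coeff q \<tau> (hcoeff q \<tau> D (Suc j)) m * u m)"
    by (rule sum.cong[OF refl]) (subst rel_same_coeff[OF iD], simp add: algebra_simps)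
  also have "\<dots> = (1 - q ^ Suc j / q ^ D) * hD q D \<tau> \<eta> (Suc j)"
    unfolding h sum_distrib_left by (simp add: mult.assoc)
  finally show ?thesis ..
qed

lemma rel_next_coeff_generic:
  assumes iD: "Suc (m + r) < D"
  shows "rebase_coeff q \<tau> (hcoeff q \<tau> D (Suc (Suc (m + r)))) m
    = mult_coeff q \<tau> (hperp_coeff q \<tau> D (Suc (m + r))) m
      - (\<tau> + inverse \<tau> / q ^ D) * hperp_coeff q \<tau> D (Suc (m + r)) m
      - (1 - 1 / q ^ D) * (1 - q ^ Suc (m + r)) * hperp_coeff q \<tau> D (m + r) m"
proof -
  define E where "E = q ^ D"
  define M where "M = q ^ m"
  define P where "P = q ^ m * q ^ r"
  define T where "T = \<tau> ^ m * \<tau> ^ r"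
  define F where "F = qpochp q 1 0 m"
  define W where "W = qpochp q (m + 2) D r"
  have E0: "E \<noteq> 0" and M0: "M \<noteq> 0" and P0: "P \<noteq> 0" and T0: "T \<noteq> 0"
    using q_nonzero tau_nonzero by (simp_all add: E_def M_def P_def T_def)
  have F0: "F \<noteq> 0" unfolding F_def by (rule qpochp_nonzero[OF q_power_inj]) auto
  have nF: "1 - q * M \<noteq> 0"
    using one_minus_power_nonzero[OF q_power_inj, where a = "Suc m"] by (simp add: M_def)
  have n1: "1 - M / (q * P) \<noteq> 0"
    using one_minus_power_ratio_nonzero[OF q_power_inj, of m "Suc (m + r)"] by (simp add: P_def M_def power_add)
  have n2: "1 - M / (q * q * P) \<noteq> 0"
    using one_minus_power_ratio_nonzero[OF q_power_inj, of m "Suc (Suc (m + r))"] by (simp add: P_def M_def power_add)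
  define Z where "Z = qpochp q 0 (m + r) m / ((1 - M / (q * P)) * (1 - M / (q * q * P)))"
  have G1: "qpochp q 0 (m + r) m = (1 - M / (q * P)) * (1 - M / (q * q * P)) * Z"
    unfolding Z_def using n1 n2 by simp
  have G2: "qpochp q 0 (Suc (m + r)) m = (1 - M / (q * q * P)) * (1 - 1 / (q * P)) * Z"
  proof -
    have "qpochp q 0 (Suc (m + r)) m * (1 - M / (q * P)) = (1 - 1 / (q * P)) * qpochp q 0 (m + r) m"
      using qpochp_0_Suc_mult[OF q_nonzero, of "m + r" m] by (simp add: M_def P_def power_add)
    hence "(1 - M / (q * P)) * qpochp q 0 (Suc (m + r)) m = (1 - M / (q * P)) * ((1 - M / (q * q * P)) * (1 - 1 / (q * P)) * Z)"
      unfolding G1 by (simp add: mult_ac)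
    thus ?thesis using mult_left_cancel[OF n1] by blast
  qed
  have G3: "qpochp q 0 (Suc (Suc (m + r))) m = (1 - 1 / (q * P)) * (1 - 1 / (q * q * P)) * Z"
  proof -
    have "qpochp q 0 (Suc (Suc (m + r))) m * (1 - M / (q * q * P)) = (1 - 1 / (q * q * P)) * qpochp q 0 (Suc (m + r)) m"
      using qpochp_0_Suc_mult[OF q_nonzero, of "Suc (m + r)" m] by (simp add: M_def P_def power_add)
    hence "(1 - M / (q * q * P)) * qpochp q 0 (Suc (Suc (m + r))) m = (1 - M / (q * q * P)) * ((1 - 1 / (q * P)) * (1 - 1 / (q * q * P)) * Z)"
      unfolding G2 by (simp add: mult_ac)
    thus ?thesis using mult_left_cancel[OF n2] by blast
  qed
  have pwT: "\<tau> ^ Suc (Suc (m + r)) = \<tau> * \<tau> * T" "(\<tau> * q) ^ Suc (m + r) = \<tau> * q * T * P"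
     "(\<tau> * q) ^ (m + r) = T * P" "q ^ m = M" "q ^ Suc m = q * M"
    by (simp_all add: T_def P_def M_def power_add power_mult_distrib)
  have coeff_A: "hcoeff q \<tau> D (Suc (Suc (m + r))) m = inverse (\<tau> * \<tau> * T) * (1 - M / E) * (1 - q * M / E) * W * (1 - 1 / (q * P)) * (1 - 1 / (q * q * P)) * Z * M / F"
  proof -
    have "qpochp q m D (Suc (Suc (m + r)) - m) = (1 - M / E) * (1 - q * M / E) * W"
    proof -
      have "Suc (Suc (m + r)) - m = Suc (Suc r)" by simp
      thus ?thesis using qpochp_Suc_shift[of q m D "Suc r"] qpochp_Suc_shift[of q "Suc m" D r]
        by (simp add: M_def E_def W_def numeral_2_eq_2)
    qed
    thus ?thesis unfolding hcoeff_def G3 F_def[symmetric] pwT by (simp add: mult_ac)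
  qed
  have coeff_A_Suc: "hcoeff q \<tau> D (Suc (Suc (m + r))) (Suc m) * (1 - 1 / q ^ Suc m) =
      - inverse (\<tau> * \<tau> * T) * (1 - q * M / E) * W * (1 - M / (q * q * P)) * (1 - 1 / (q * P)) * (1 - 1 / (q * q * P)) * Z / F"
  proof -
    have a: "qpochp q 0 (Suc (Suc (m + r))) (Suc m) = (1 - 1 / (q * P)) * (1 - 1 / (q * q * P)) * Z * (1 - M / (q * q * P))"
      using G3 by (simp add: qpochp_Suc P_def M_def power_add)
    have b: "qpochp q 1 0 (Suc m) = F * (1 - q * M)" by (simp add: qpochp_Suc F_def M_def)
    have c: "qpochp q (Suc m) D (Suc (Suc (m + r)) - Suc m) = (1 - q * M / E) * W"
    proof -
      have "Suc (Suc (m + r)) - Suc m = Suc r" by simp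
      thus ?thesis using qpochp_Suc_shift[of q "Suc m" D r] by (simp add: M_def E_def W_def numeral_2_eq_2)
    qed
    show ?thesis unfolding hcoeff_def a b c pwT using F0 nF q_nonzero M0 E0 P0 T0 tau_nonzero
      by (simp add: field_simps)
  qed
  have coeff_B_Suc: "hperp_coeff q \<tau> D (Suc (m + r)) m = inverse (\<tau> * q * T * P) * W * (1 - q * q * P / E) * (1 - M / (q * q * P)) * (1 - 1 / (q * P)) * Z * M / F"
  proof -
    have "qpochp q (m + 2) D (Suc (m + r) - m) = W * (1 - q * q * P / E)"
      by (simp add: Suc_diff_le qpochp_Suc P_def E_def W_def power_add mult_ac)
    thus ?thesis unfolding hperp_coeff_def G2 F_def[symmetric] pwT by (simp add: mult_ac)
  qed
  have coeff_B: "hperp_coeff q \<tau> D (m + r) m = inverse (T * P) * W * (1 - M / (q * P)) * (1 - M / (q * q * P)) * Z * M / F"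
    unfolding hperp_coeff_def G1 F_def[symmetric] pwT by (simp add: W_def mult_ac)
  have coeff_B_shift: "shift_seq (hperp_coeff q \<tau> D (Suc (m + r))) m = inverse (\<tau> * q * T * P) * (1 - q * M / E) * W * (1 - q * q * P / E) * (1 - 1 / (q * P)) * Z * (M / q) * (1 - M) / F"
  proof (cases m)
    case 0 then show ?thesis by (simp add: shift_seq_def M_def)
  next
    case (Suc k)
    have a: "qpochp q (k + 2) D (Suc (m + r) - k) = (1 - q * M / E) * (W * (1 - q * q * P / E))"
    proof -
      have "Suc (m + r) - k = Suc (Suc r)" using Suc by simp
      hence "qpochp q (k + 2) D (Suc (m + r) - k) = (1 - q ^ (k + 2) / q ^ D) * qpochp q (m + 2) D (Suc r)"
        using qpochp_Suc_shift[of q "k + 2" D "Suc r"] Suc by simp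
      also have "qpochp q (m + 2) D (Suc r) = W * (1 - q * q * P / E)"
        by (simp add: qpochp_Suc P_def E_def W_def power_add mult_ac)
      finally show ?thesis using Suc by (simp add: M_def E_def)
    qed
    have b: "qpochp q 0 (Suc (m + r)) k = (1 - 1 / (q * P)) * Z"
    proof -
      have "qpochp q 0 (Suc (m + r)) m = qpochp q 0 (Suc (m + r)) k * (1 - M / (q * q * P))"
        unfolding Suc by (simp add: qpochp_Suc M_def P_def Suc power_add)
      hence "(1 - M / (q * q * P)) * qpochp q 0 (Suc (m + r)) k = (1 - M / (q * q * P)) * ((1 - 1 / (q * P)) * Z)"
        unfolding G2 by (metis mult.assoc mult.commute)
      thus ?thesis using mult_left_cancel[OF n2] by blast
    qed
    have nM: "1 - M \<noteq> 0" using one_minus_power_nonzero[OF q_power_inj, where a = m] Suc by (simp add: M_def)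
    have c: "qpochp q 1 0 k = F / (1 - M)"
    proof -
      have "F = qpochp q 1 0 k * (1 - M)" unfolding F_def Suc by (simp add: qpochp_Suc M_def Suc)
      thus ?thesis using nM by simp
    qed
    have d: "q ^ k = M / q" using q_nonzero by (simp add: M_def Suc)
    have cBk: "shift_seq (hperp_coeff q \<tau> D (Suc (m + r))) m = hperp_coeff q \<tau> D (Suc (m + r)) k" by (simp add: shift_seq_def Suc)
    show ?thesis unfolding cBk hperp_coeff_def a b c d pwT using q_nonzero tau_nonzero F0 nM E0 P0 T0 M0
      by (simp add: field_simps)
  qed
  have pw: "q ^ Suc (m + r) = q * P" "q ^ D = E" "q ^ (2 * m + 2) = (q * M)\<^sup>2"
    by (simp_all add: P_def E_def M_def power_add power2_eq_square power_mult_distrib) (simp add: power_mult mult_ac power2_eq_square)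
  show ?thesis
    unfolding rebase_coeff_def mult_coeff_def coeff_A_Suc unfolding coeff_A coeff_B_Suc coeff_B coeff_B_shift pw pwT
    using q_nonzero tau_nonzero M0 P0 E0 F0 T0 by (simp add: field_simps power2_eq_square)
qed

lemma rel_next_coeff_diag:
  assumes top: "m = Suc j"
  shows "rebase_coeff q \<tau> (hcoeff q \<tau> D (Suc (Suc j))) m
    = mult_coeff q \<tau> (hperp_coeff q \<tau> D (Suc j)) m
      - (\<tau> + inverse \<tau> / q ^ D) * hperp_coeff q \<tau> D (Suc j) m
      - (1 - 1 / q ^ D) * (1 - q ^ Suc j) * hperp_coeff q \<tau> D j m"
proof -
  define E where "E = q ^ D"
  define P where "P = q ^ j"
  define T where "T = \<tau> ^ j"
  define F where "F = qpochp q 1 0 j"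
  have E0: "E \<noteq> 0" and P0: "P \<noteq> 0" and T0: "T \<noteq> 0"
    using q_nonzero tau_nonzero by (simp_all add: E_def P_def T_def)
  have F0: "F \<noteq> 0" unfolding F_def by (rule qpochp_nonzero[OF q_power_inj]) auto
  have n1: "1 - q * P \<noteq> 0"
    using one_minus_power_nonzero[OF q_power_inj, where a = "Suc j"] by (simp add: P_def)
  have n2: "1 - q * q * P \<noteq> 0"
    using one_minus_power_nonzero[OF q_power_inj, of "Suc (Suc j)"] by (simp add: P_def mult.assoc)
  have nq: "1 - 1 / q \<noteq> 0"
    using one_minus_power_ratio_nonzero[OF q_power_inj, of 0 1] by simp
  define Z where "Z = qpochp q 0 j j / (1 - 1 / q)"
  have Z1: "qpochp q 0 j j = (1 - 1 / q) * Z" unfolding Z_def using nq by simp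
  have Z2: "qpochp q 0 (Suc j) j = (1 - 1 / (q * P)) * Z"
  proof -
    have "qpochp q 0 (Suc j) j * (1 - 1 / q) = (1 - 1 / (q * P)) * qpochp q 0 j j"
      using qpochp_0_Suc_mult[OF q_nonzero, of j j] q_nonzero by (simp add: P_def)
    hence "(1 - 1 / q) * qpochp q 0 (Suc j) j = (1 - 1 / q) * ((1 - 1 / (q * P)) * Z)"
      unfolding Z1 by (metis mult.assoc mult.commute)
    thus ?thesis using mult_left_cancel[OF nq] by blast
  qed
  have Z3: "qpochp q 0 (Suc j) (Suc j) = (1 - 1 / (q * P)) * Z * (1 - 1 / q)"
    using Z2 q_nonzero by (simp add: qpochp_Suc P_def)
  have Z4: "qpochp q 0 (Suc (Suc j)) (Suc j) = (1 - 1 / (q * P)) * (1 - 1 / (q * q * P)) * Z"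
  proof -
    have "qpochp q 0 (Suc (Suc j)) (Suc j) * (1 - 1 / q) = (1 - 1 / (q * q * P)) * qpochp q 0 (Suc j) (Suc j)"
      using qpochp_0_Suc_mult[OF q_nonzero, of "Suc j" "Suc j"] q_nonzero by (simp add: P_def)
    hence "(1 - 1 / q) * qpochp q 0 (Suc (Suc j)) (Suc j) = (1 - 1 / q) * ((1 - 1 / (q * P)) * (1 - 1 / (q * q * P)) * Z)"
      unfolding Z3 by (metis mult.assoc mult.commute)
    thus ?thesis using mult_left_cancel[OF nq] by blast
  qed
  have Z5: "qpochp q 0 (Suc (Suc j)) (Suc (Suc j)) = (1 - 1 / (q * P)) * (1 - 1 / (q * q * P)) * Z * (1 - 1 / q)"
    using Z4 q_nonzero by (simp add: qpochp_Suc P_def)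
  have D1: "qpochp q (Suc j) D 1 = 1 - q * P / E" by (simp add: qpochp_Suc P_def E_def)
  have D2: "qpochp q (j + 2) D 1 = 1 - q * q * P / E" by (simp add: qpochp_Suc P_def E_def power_add)
  have Fs: "qpochp q 1 0 (Suc j) = F * (1 - q * P)" "qpochp q 1 0 (Suc (Suc j)) = F * (1 - q * P) * (1 - q * q * P)"
    by (simp_all add: qpochp_Suc F_def P_def)
  have z: "hperp_coeff q \<tau> D j m = 0" using top hperp_coeff_eq_0[OF q_nonzero] by auto
  have sB: "shift_seq (hperp_coeff q \<tau> D (Suc j)) m = hperp_coeff q \<tau> D (Suc j) j" by (simp add: shift_seq_def top)
  have pw: "q ^ Suc (Suc j) = q * q * P" "\<tau> ^ Suc (Suc j) = \<tau> * \<tau> * T" "(\<tau> * q) ^ Suc j = \<tau> * q * T * P"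
    "q ^ Suc j = q * P" "q ^ D = E" "q ^ j = P" "q ^ (2 * Suc j + 2) = (q * q * P)\<^sup>2"
    by (simp_all add: P_def T_def E_def power_mult_distrib power2_eq_square power_add)
      (simp add: power_mult_distrib power_mult mult_ac power2_eq_square)
  have e1: "Suc (Suc j) - Suc j = 1" "Suc j - j = 1" "Suc j - Suc j = 0" "Suc (Suc j) - Suc (Suc j) = 0" by simp_all
  define F2 where "F2 = qpochp q 1 0 (Suc (Suc j))"
  have F20: "F2 \<noteq> 0" unfolding F2_def by (rule qpochp_nonzero[OF q_power_inj]) auto
  have iF: "inverse (qpochp q 1 0 (Suc (Suc j))) = 1 / F2" "inverse (qpochp q 1 0 (Suc j)) = (1 - q * q * P) / F2"
      "inverse (qpochp q 1 0 j) = (1 - q * P) * (1 - q * q * P) / F2"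
  proof -
    have f2: "F2 = qpochp q 1 0 (Suc j) * (1 - q * q * P)" unfolding F2_def by (simp add: qpochp_Suc P_def mult.assoc)
    have f1: "qpochp q 1 0 (Suc j) = qpochp q 1 0 j * (1 - q * P)" by (simp add: qpochp_Suc P_def)
    have f1n: "qpochp q 1 0 (Suc j) \<noteq> 0" by (rule qpochp_nonzero[OF q_power_inj]) auto
    show "inverse (qpochp q 1 0 (Suc (Suc j))) = 1 / F2" unfolding F2_def by (simp add: inverse_eq_divide)
    show "inverse (qpochp q 1 0 (Suc j)) = (1 - q * q * P) / F2" unfolding f2 using n2 f1n by (simp add: inverse_eq_divide)
    show "inverse (qpochp q 1 0 j) = (1 - q * P) * (1 - q * q * P) / F2" unfolding f2 f1 inverse_eq_divide
      using n1 n2 F0[unfolded F_def] by simp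
  qed
  have dv: "\<And>a n. a / qpochp q 1 0 n = a * inverse (qpochp q 1 0 n)" by (simp add: divide_inverse)
  show ?thesis unfolding rebase_coeff_def mult_coeff_def z sB unfolding top hcoeff_def hperp_coeff_def
    unfolding e1 D1 D2 Z4 Z5 Z3 Z2 pw dv iF
    using q_nonzero tau_nonzero P0 T0 F20 E0 by (simp add: field_simps power2_eq_square)
qed

lemma rel_next_coeff_diag2:
  assumes top2: "m = Suc (Suc j)"
  shows "rebase_coeff q \<tau> (hcoeff q \<tau> D (Suc (Suc j))) m
    = mult_coeff q \<tau> (hperp_coeff q \<tau> D (Suc j)) m
      - (\<tau> + inverse \<tau> / q ^ D) * hperp_coeff q \<tau> D (Suc j) m
      - (1 - 1 / q ^ D) * (1 - q ^ Suc j) * hperp_coeff q \<tau> D j m"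
proof -
  define P where "P = q ^ j"
  define T where "T = \<tau> ^ j"
  define G where "G = qpochp q 0 (Suc j) (Suc j)"
  define F where "F = qpochp q 1 0 (Suc j)"
  have P0: "P \<noteq> 0" and T0: "T \<noteq> 0" using q_nonzero tau_nonzero by (simp_all add: P_def T_def)
  have F0: "F \<noteq> 0" unfolding F_def by (rule qpochp_nonzero[OF q_power_inj]) auto
  have n2: "1 - q * q * P \<noteq> 0"
    using one_minus_power_nonzero[OF q_power_inj, of "Suc (Suc j)"] by (simp add: P_def mult.assoc)
  have a: "qpochp q 0 (Suc (Suc j)) (Suc (Suc j)) = (1 - 1 / (q * q * P)) * G"
    using qpochp_Suc_shift[of q 0 "Suc (Suc j)" "Suc j"] qpochp_Suc_Suc[OF q_nonzero, of 0 "Suc j" "Suc j"] by (simp add: G_def P_def)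
  have b: "qpochp q 1 0 (Suc (Suc j)) = F * (1 - q * q * P)" by (simp add: qpochp_Suc F_def P_def)
  have z: "hcoeff q \<tau> D (Suc (Suc j)) (Suc m) = 0" "hperp_coeff q \<tau> D (Suc j) m = 0" "hperp_coeff q \<tau> D j m = 0"
    using top2 hcoeff_eq_0[OF q_nonzero] hperp_coeff_eq_0[OF q_nonzero] by auto
  have sB: "shift_seq (hperp_coeff q \<tau> D (Suc j)) m = hperp_coeff q \<tau> D (Suc j) (Suc j)" by (simp add: shift_seq_def top2)
  have pw: "q ^ Suc (Suc j) = q * q * P" "\<tau> ^ Suc (Suc j) = \<tau> * \<tau> * T" "(\<tau> * q) ^ Suc j = \<tau> * q * T * P"
    "q ^ Suc j = q * P"
    by (simp_all add: P_def T_def power_mult_distrib)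
  show ?thesis unfolding rebase_coeff_def mult_coeff_def z sB unfolding top2 hcoeff_def hperp_coeff_def a b
    unfolding G_def[symmetric] F_def[symmetric] pw using q_nonzero tau_nonzero P0 T0 F0 n2
    by (simp add: field_simps)
qed

lemma rel_next_coeff:
  assumes iD: "Suc j < D"
  shows "rebase_coeff q \<tau> (hcoeff q \<tau> D (Suc (Suc j))) m
    = mult_coeff q \<tau> (hperp_coeff q \<tau> D (Suc j)) m
      - (\<tau> + inverse \<tau> / q ^ D) * hperp_coeff q \<tau> D (Suc j) m
      - (1 - 1 / q ^ D) * (1 - q ^ Suc j) * hperp_coeff q \<tau> D j m"
proof -
  consider (gen) "m \<le> j" | (top) "m = Suc j" | (top2) "m = Suc (Suc j)" | (big) "Suc (Suc j) < m" by linarith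
  then show ?thesis
  proof cases
    case gen
    then obtain r where r: "j = m + r" using le_Suc_ex by blast
    have mr: "Suc (m + r) < D" using iD r by simp
    show ?thesis unfolding r by (rule rel_next_coeff_generic[OF mr])
  next
    case big
    have z: "hcoeff q \<tau> D (Suc (Suc j)) m = 0" "hcoeff q \<tau> D (Suc (Suc j)) (Suc m) = 0" "hperp_coeff q \<tau> D (Suc j) m = 0"
      "hperp_coeff q \<tau> D j m = 0" "shift_seq (hperp_coeff q \<tau> D (Suc j)) m = 0"
      using big hcoeff_eq_0[OF q_nonzero] hperp_coeff_eq_0[OF q_nonzero] by (auto simp: shift_seq_def split: nat.split)
    show ?thesis unfolding rebase_coeff_def mult_coeff_def z by simp
  next
    case top2
    show ?thesis by (rule rel_next_coeff_diag2[OF top2])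
  next
    case top
    show ?thesis by (rule rel_next_coeff_diag[OF top])
  qed
qed

lemma hD_hperp_rel_next:
  assumes e: "\<eta> \<noteq> 0" and iD: "Suc j < D"
  shows "hD q D \<tau> \<eta> (Suc (Suc j)) =
     ((\<eta> + inverse \<eta>) - (\<tau> + inverse \<tau> / q ^ D)) * hperp q D \<tau> \<eta> (int (Suc j))
     - (1 - 1 / q ^ D) * (1 - q ^ Suc j) * hperp q D \<tau> \<eta> (int j)"
proof -
  define u where "u = ubasis q (\<tau> * q) \<eta>"
  have h: "hD q D \<tau> \<eta> (Suc (Suc j)) = (\<Sum>m\<le>D. rebase_coeff q \<tau> (hcoeff q \<tau> D (Suc (Suc j))) m * u m)"
    using hD_ubasis_expansion[of "Suc (Suc j)" D \<eta>] iD unfolding u_def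
    by (simp add: sum_ubasis_rebase[OF e q_nonzero] hcoeff_eq_0[OF q_nonzero])
  have H1: "hperp q D \<tau> \<eta> (int (Suc j)) = (\<Sum>m\<le>D. hperp_coeff q \<tau> D (Suc j) m * u m)"
    unfolding u_def by (rule hperp_ubasis_expansion[OF e]) (use iD in auto)
  have H0: "hperp q D \<tau> \<eta> (int j) = (\<Sum>m\<le>D. hperp_coeff q \<tau> D j m * u m)"
    unfolding u_def by (rule hperp_ubasis_expansion[OF e]) (use iD in auto)
  have XH1: "(\<eta> + inverse \<eta>) * hperp q D \<tau> \<eta> (int (Suc j)) = (\<Sum>m\<le>D. mult_coeff q \<tau> (hperp_coeff q \<tau> D (Suc j)) m * u m)"
    unfolding H1 u_def using iD
    by (simp add: sum_ubasis_mult_eta_sum[OF e q_nonzero tau_nonzero] hperp_coeff_eq_0[OF q_nonzero])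
  have "((\<eta> + inverse \<eta>) - (\<tau> + inverse \<tau> / q ^ D)) * hperp q D \<tau> \<eta> (int (Suc j))
     - (1 - 1 / q ^ D) * (1 - q ^ Suc j) * hperp q D \<tau> \<eta> (int j)
     = 1 * ((\<eta> + inverse \<eta>) * hperp q D \<tau> \<eta> (int (Suc j)))
       + (- (\<tau> + inverse \<tau> / q ^ D)) * hperp q D \<tau> \<eta> (int (Suc j))
       + (- ((1 - 1 / q ^ D) * (1 - q ^ Suc j))) * hperp q D \<tau> \<eta> (int j)"
    by (simp add: algebra_simps)
  also have "\<dots> = (\<Sum>m\<le>D. (1 * mult_coeff q \<tau> (hperp_coeff q \<tau> D (Suc j)) m
       + (- (\<tau> + inverse \<tau> / q ^ D)) * hperp_coeff q \<tau> D (Suc j) m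
       + (- ((1 - 1 / q ^ D) * (1 - q ^ Suc j))) * hperp_coeff q \<tau> D j m) * u m)"
    unfolding XH1 unfolding H1 H0 by (rule sum_lincomb3)
  also have "\<dots> = (\<Sum>m\<le>D. rebase_coeff q \<tau> (hcoeff q \<tau> D (Suc (Suc j))) m * u m)"
    by (rule sum.cong[OF refl]) (subst rel_next_coeff[OF iD], simp add: algebra_simps)
  finally show ?thesis unfolding h ..
qed

lemma hperp_0: "hperp q D \<tau> \<eta> 0 = 1"
  using D_ge_3 by (simp add: hperp_def hpoly_def phi32_term_def)

lemma hD_hperp_rel_next_0:
  assumes e: "\<eta> \<noteq> 0"
  shows "hD q D \<tau> \<eta> 1 = ((\<eta> + inverse \<eta>) - (\<tau> + inverse \<tau> / q ^ D)) * hperp q D \<tau> \<eta> 0"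
proof -
  have n1: "1 - inverse (q ^ D) \<noteq> 0"
    using one_minus_power_ratio_nonzero[OF q_power_inj, of 0 D] D_ge_3 by (simp add: inverse_eq_divide)
  have nq: "1 - q \<noteq> 0" using one_minus_power_nonzero[OF q_power_inj, of 1] by simp
  define K where "K = (1 - \<tau> / \<eta>) * (1 - \<tau> * \<eta>)"
  have a: "(1 - inverse q) * q / (1 - q) = -1" using nq q_nonzero by (simp add: field_simps)
  have p: "phi32_term 1 (\<tau> / \<eta>) (\<tau> * \<eta>) 0 (inverse (q ^ D)) q q = 1 + K / (1 - inverse (q ^ D)) * ((1 - inverse q) * q / (1 - q))"
    unfolding phi32_term_def K_def by (simp add: qpoch_def field_simps)
  have "hD q D \<tau> \<eta> 1 = (1 - inverse (q ^ D)) / \<tau> * (1 - K / (1 - inverse (q ^ D)))"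
    unfolding hD_def hpoly_def p a by (simp add: qpoch_def)
  also have "\<dots> = ((1 - inverse (q ^ D)) * (1 - K / (1 - inverse (q ^ D)))) / \<tau>" by simp
  also have "(1 - inverse (q ^ D)) * (1 - K / (1 - inverse (q ^ D))) = (1 - inverse (q ^ D)) - K"
    using n1 by (simp add: right_diff_distrib)
  also have "((1 - inverse (q ^ D)) - K) / \<tau> = ((\<eta> + inverse \<eta>) - (\<tau> + inverse \<tau> / q ^ D)) * hperp q D \<tau> \<eta> 0"
    unfolding hperp_0 K_def using q_nonzero tau_nonzero e by (simp add: field_simps power2_eq_square)
  finally show ?thesis .
qed

lemma ell_norm_nonzero: "ell_norm q D \<tau> i \<noteq> 0"
proof -
  have "qpochp q 1 0 i \<noteq> 0"
    by (rule qpochp_nonzero[OF q_power_inj]) auto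
  then show ?thesis
    unfolding ell_norm_def qpoch_q
    using one_minus_power_nonzero[OF q_power_inj, of D] tau_nonzero D_ge_3 by auto
qed

lemma ellm_normalized:
  assumes "i \<le> D"
  shows "ell_norm q D \<tau> i * ellm q D \<tau> \<eta> (int i) =
     (q ^ D - q ^ i) * hD q D \<tau> \<eta> i - (1 - q ^ i) * pperp_at (q ^ D) \<tau> \<eta> * hperp q D \<tau> \<eta> (int i - 1)"
proof (cases "i = D")
  case True
  then show ?thesis
    using ell_norm_nonzero[of D] D_ge_3 unfolding ellm_def pperp_eq_pperp_at ell_norm_def
    by (simp add: field_simps)
next
  case False
  then have iD: "i < D" using assms by simp
  have "ell_norm q D \<tau> i * ellm q D \<tau> \<eta> (int i) = (q ^ D - q ^ i) *
      (hD q D \<tau> \<eta> i - (1 - q ^ i) / (q ^ D - q ^ i) * pperp_at (q ^ D) \<tau> \<eta> * hperp q D \<tau> \<eta> (int i - 1))"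
    using iD ell_norm_nonzero[of i] unfolding ellm_def pperp_eq_pperp_at
    by (simp add: ell_norm_def)
  also have "\<dots> = (q ^ D - q ^ i) * hD q D \<tau> \<eta> i
      - (1 - q ^ i) * pperp_at (q ^ D) \<tau> \<eta> * hperp q D \<tau> \<eta> (int i - 1)"
  proof -
    have "q ^ D - q ^ i \<noteq> 0" using injD[OF q_power_inj, of D i] iD by auto
    then show ?thesis by (simp add: right_diff_distrib)
  qed
  finally show ?thesis .
qed

lemma ellp_normalized:
  assumes "i < D"
  shows "ell_norm q D \<tau> i * ellp q D \<tau> \<eta> (int i) =
     - (hD q D \<tau> \<eta> (i + 1) - pperp_at (q ^ D) \<tau> \<eta> * hperp q D \<tau> \<eta> (int i)) / \<tau>"
  using assms ell_norm_nonzero[of i] tau_nonzero unfolding ellp_def ell_norm_def pperp_eq_pperp_at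
  by (simp add: field_simps)

lemma ellp_normalized_top:
  assumes "\<eta> \<noteq> 0"
  shows "ell_norm q D \<tau> D * ellp q D \<tau> \<eta> (int D) =
     - (q ^ D - 1) * inverse \<eta> * pperp_at (q ^ D) \<tau> \<eta> * hperp q D \<tau> \<eta> (int D - 1) / \<tau>"
  using assms D_ge_3 ell_norm_nonzero[of D] tau_nonzero unfolding ellp_def ell_norm_def pperp_eq_pperp_at
  by (simp add: field_simps)

lemma rel_same_holds:
  assumes "\<eta> \<noteq> 0" and "i < D"
  shows "rel_same (q ^ D) \<tau> \<eta> (q ^ i) (hD q D \<tau> \<eta> i) (hperp q D \<tau> \<eta> (int i)) (hperp q D \<tau> \<eta> (int i - 1))"
proof (cases i)
  case 0
  then show ?thesis unfolding rel_same_def using hD_0 hperp_0 by simp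
next
  case (Suc j)
  then have "int i - 1 = int j" by simp
  then show ?thesis
    unfolding rel_same_def Suc using hD_hperp_rel_same[OF assms(1), of j] assms(2) Suc by simp
qed

lemma rel_next_holds:
  assumes "\<eta> \<noteq> 0" and "i < D"
  shows "rel_next (q ^ D) \<tau> \<eta> (q ^ i) (hD q D \<tau> \<eta> (i + 1)) (hperp q D \<tau> \<eta> (int i)) (hperp q D \<tau> \<eta> (int i - 1))"
proof (cases i)
  case 0
  then show ?thesis unfolding rel_next_def using hD_hperp_rel_next_0[OF assms(1)] by simp
next
  case (Suc j)
  then have "int i - 1 = int j" by simp
  then show ?thesis
    unfolding rel_next_def Suc using hD_hperp_rel_next[OF assms(1), of j] assms(2) Suc by simp
qed

lemma ellp_prev_normalized:
  assumes "i < D"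
  shows "ell_norm q D \<tau> i * ellp q D \<tau> \<eta> (int i - 1) =
    - (hD q D \<tau> \<eta> i - pperp_at (q ^ D) \<tau> \<eta> * hperp q D \<tau> \<eta> (int i - 1)) * (1 - q ^ i)"
proof (cases i)
  case (Suc j)
  then have ij: "int i - 1 = int j" by simp
  have "ell_norm q D \<tau> i * ellp q D \<tau> \<eta> (int i - 1) = (1 - q ^ i) * (\<tau> * (ell_norm q D \<tau> j * ellp q D \<tau> \<eta> (int j)))"
    unfolding Suc ell_norm_Suc ij by (simp add: mult_ac)
  moreover have "\<tau> * (ell_norm q D \<tau> j * ellp q D \<tau> \<eta> (int j)) =
      - (hD q D \<tau> \<eta> i - pperp_at (q ^ D) \<tau> \<eta> * hperp q D \<tau> \<eta> (int i - 1))"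
    using ellp_normalized[of j \<eta>] assms ij tau_nonzero unfolding Suc by simp
  ultimately show ?thesis by (simp add: ac_simps)
qed simp

lemma ellm_prev_normalized:
  assumes "i < D" and "i = Suc j"
  shows "ell_norm q D \<tau> i * ellm q D \<tau> \<eta> (int i - 1) = \<tau> * (1 - q ^ i) *
    ((q ^ D - q ^ j) * hD q D \<tau> \<eta> j - (1 - q ^ j) * pperp_at (q ^ D) \<tau> \<eta> * hperp q D \<tau> \<eta> (int j - 1))"
proof -
  have "int i - 1 = int j" using assms(2) by simp
  then have "ell_norm q D \<tau> i * ellm q D \<tau> \<eta> (int i - 1) = \<tau> * (1 - q ^ i) * (ell_norm q D \<tau> j * ellm q D \<tau> \<eta> (int j))"
    unfolding assms(2) ell_norm_Suc by (simp add: mult_ac)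
  moreover have "ell_norm q D \<tau> j * ellm q D \<tau> \<eta> (int j) =
      (q ^ D - q ^ j) * hD q D \<tau> \<eta> j - (1 - q ^ j) * pperp_at (q ^ D) \<tau> \<eta> * hperp q D \<tau> \<eta> (int j - 1)"
    using ellm_normalized[of j \<eta>] assms by simp
  ultimately show ?thesis by simp
qed

lemma ellm_next_normalized:
  assumes "i < D"
  shows "ell_norm q D \<tau> i * (1 - q ^ Suc i) * ellm q D \<tau> \<eta> (int i + 1) =
    ((q ^ D - q ^ Suc i) * hD q D \<tau> \<eta> (Suc i) - (1 - q ^ Suc i) * pperp_at (q ^ D) \<tau> \<eta> * hperp q D \<tau> \<eta> (int i)) / \<tau>"
proof -
  have "ell_norm q D \<tau> i * (1 - q ^ Suc i) * ellm q D \<tau> \<eta> (int i + 1) =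
      ell_norm q D \<tau> (Suc i) * ellm q D \<tau> \<eta> (int (Suc i)) / \<tau>"
    unfolding ell_norm_Suc using tau_nonzero by (simp add: field_simps)
  moreover have "ell_norm q D \<tau> (Suc i) * ellm q D \<tau> \<eta> (int (Suc i)) =
      (q ^ D - q ^ Suc i) * hD q D \<tau> \<eta> (Suc i) - (1 - q ^ Suc i) * pperp_at (q ^ D) \<tau> \<eta> * hperp q D \<tau> \<eta> (int i)"
    using ellm_normalized[of "Suc i" \<eta>] assms by simp
  ultimately show ?thesis by simp
qed

lemma ellp_next_normalized:
  assumes "Suc i < D"
  shows "ell_norm q D \<tau> i * (1 - q ^ Suc i) * ellp q D \<tau> \<eta> (int i + 1) =
    - (hD q D \<tau> \<eta> (Suc (Suc i)) - pperp_at (q ^ D) \<tau> \<eta> * hperp q D \<tau> \<eta> (int i + 1)) / \<tau>\<^sup>2"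
proof -
  have "ell_norm q D \<tau> i * (1 - q ^ Suc i) * ellp q D \<tau> \<eta> (int i + 1) =
      ell_norm q D \<tau> (Suc i) * ellp q D \<tau> \<eta> (int (Suc i)) / \<tau>"
    unfolding ell_norm_Suc using tau_nonzero by (simp add: field_simps)
  moreover have "ell_norm q D \<tau> (Suc i) * ellp q D \<tau> \<eta> (int (Suc i)) =
      - (hD q D \<tau> \<eta> (Suc (Suc i)) - pperp_at (q ^ D) \<tau> \<eta> * hperp q D \<tau> \<eta> (int i + 1)) / \<tau>"
    using ellp_normalized[OF assms, of \<eta>] by (simp add: add.commute)
  ultimately show ?thesis using tau_nonzero by (simp add: field_simps power2_eq_square)
qed

lemma ellp_next_normalized_top:
  assumes "\<eta> \<noteq> 0" and "Suc i = D"
  shows "ell_norm q D \<tau> i * (1 - q ^ Suc i) * ellp q D \<tau> \<eta> (int i + 1) =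
    - (q ^ D - 1) * inverse \<eta> * pperp_at (q ^ D) \<tau> \<eta> * hperp q D \<tau> \<eta> (int i) / \<tau>\<^sup>2"
proof -
  have "ell_norm q D \<tau> i * (1 - q ^ Suc i) * ellp q D \<tau> \<eta> (int i + 1) =
      ell_norm q D \<tau> D * ellp q D \<tau> \<eta> (int D) / \<tau>"
    unfolding assms(2)[symmetric] ell_norm_Suc using tau_nonzero by (simp add: field_simps)
  moreover have "int D - 1 = int i" using assms(2) by simp
  ultimately show ?thesis
    using ellp_normalized_top[OF assms(1)] tau_nonzero by (simp add: field_simps power2_eq_square)
qed

lemma eta_mult_ellm:
  assumes e: "\<eta> \<noteq> 0" and iD: "i < D"
  shows "\<eta> * ellm q D \<tau> \<eta> (int i) =
      (\<tau> * q ^ D + inverse \<tau>) * (q ^ i / q ^ D - 1) * ellp q D \<tau> \<eta> (int i - 1)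
      + (\<tau> * q ^ D + inverse \<tau>) * (q ^ i / q ^ D) * ellm q D \<tau> \<eta> (int i)
      + \<tau> * (q ^ D - q * q ^ i + 1) * ellp q D \<tau> \<eta> (int i)
      + \<tau> * (1 - q * q ^ i) * ellm q D \<tau> \<eta> (int i + 1)"
proof -
  define E where "E = q ^ D"
  define Q where "Q = q ^ i"
  define N where "N = ell_norm q D \<tau> i"
  have E0: "E \<noteq> 0" unfolding E_def using q_nonzero by simp
  have "N * (\<eta> * ellm q D \<tau> \<eta> (int i)) = \<eta> * (N * ellm q D \<tau> \<eta> (int i))"
    by (simp only: mult_ac)
  also have "\<dots> = (\<tau> * E + inverse \<tau>) * (Q / E - 1) * (N * ellp q D \<tau> \<eta> (int i - 1))
      + (\<tau> * E + inverse \<tau>) * (Q / E) * (N * ellm q D \<tau> \<eta> (int i))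
      + \<tau> * (E - q * Q + 1) * (N * ellp q D \<tau> \<eta> (int i))
      + \<tau> * (N * (1 - q * Q) * ellm q D \<tau> \<eta> (int i + 1))"
    using eta_ellm_algebra[OF q_nonzero tau_nonzero e E0
        rel_same_holds[OF e iD, folded E_def Q_def] rel_next_holds[OF e iD, folded E_def Q_def]]
      ellm_normalized[of i \<eta>] ellp_prev_normalized[OF iD, of \<eta>] ellp_normalized[OF iD, of \<eta>]
      ellm_next_normalized[OF iD, of \<eta>] iD
    unfolding E_def Q_def N_def by simp
  also have "\<dots> = N * ((\<tau> * E + inverse \<tau>) * (Q / E - 1) * ellp q D \<tau> \<eta> (int i - 1)
      + (\<tau> * E + inverse \<tau>) * (Q / E) * ellm q D \<tau> \<eta> (int i)
      + \<tau> * (E - q * Q + 1) * ellp q D \<tau> \<eta> (int i)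
      + \<tau> * (1 - q * Q) * ellm q D \<tau> \<eta> (int i + 1))"
    by (simp add: algebra_simps)
  finally show ?thesis
    using ell_norm_nonzero[of i] unfolding E_def Q_def N_def by simp
qed

lemma eta_mult_ellp:
  assumes e: "\<eta> \<noteq> 0" and iD: "i < D"
  shows "\<eta> * ellp q D \<tau> \<eta> (int i) =
      inverse \<tau> * (1 - q ^ i / q ^ D) * ellp q D \<tau> \<eta> (int i - 1)
      - inverse \<tau> * (q ^ i / q ^ D) * ellm q D \<tau> \<eta> (int i)"
proof -
  define E where "E = q ^ D"
  define Q where "Q = q ^ i"
  define N where "N = ell_norm q D \<tau> i"
  have E0: "E \<noteq> 0" unfolding E_def using q_nonzero by simp
  have "N * (\<eta> * ellp q D \<tau> \<eta> (int i)) = \<eta> * (N * ellp q D \<tau> \<eta> (int i))"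
    by (simp only: mult_ac)
  also have "\<dots> = inverse \<tau> * (1 - Q / E) * (N * ellp q D \<tau> \<eta> (int i - 1))
      - inverse \<tau> * (Q / E) * (N * ellm q D \<tau> \<eta> (int i))"
    using eta_ellp_algebra[OF q_nonzero tau_nonzero e E0
        rel_same_holds[OF e iD, folded E_def Q_def] rel_next_holds[OF e iD, folded E_def Q_def]]
      ellm_normalized[of i \<eta>] ellp_prev_normalized[OF iD, of \<eta>] ellp_normalized[OF iD, of \<eta>] iD
    unfolding E_def Q_def N_def by simp
  also have "\<dots> = N * (inverse \<tau> * (1 - Q / E) * ellp q D \<tau> \<eta> (int i - 1)
      - inverse \<tau> * (Q / E) * ellm q D \<tau> \<eta> (int i))"
    by (simp add: algebra_simps)
  finally show ?thesis
    using ell_norm_nonzero[of i] unfolding E_def Q_def N_def by simp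
qed

lemma inverse_eta_mult_ellm:
  assumes e: "\<eta> \<noteq> 0" and iD: "i < D"
  shows "inverse \<eta> * ellm q D \<tau> \<eta> (int i) =
      inverse \<tau> * (1 - q ^ i / q ^ D) * ellm q D \<tau> \<eta> (int i - 1)
      + (\<tau> * q ^ D + inverse \<tau>) * (1 - q ^ i / q ^ D) * ellp q D \<tau> \<eta> (int i - 1)
      - \<tau> * (q ^ D - q ^ i + 1) * ellp q D \<tau> \<eta> (int i)"
proof -
  define E where "E = q ^ D"
  define Q where "Q = q ^ i"
  define N where "N = ell_norm q D \<tau> i"
  have E0: "E \<noteq> 0" unfolding E_def using q_nonzero by simp
  have rels: "rel_same E \<tau> \<eta> Q (hD q D \<tau> \<eta> i) (hperp q D \<tau> \<eta> (int i)) (hperp q D \<tau> \<eta> (int i - 1))"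
    "rel_next E \<tau> \<eta> Q (hD q D \<tau> \<eta> (i + 1)) (hperp q D \<tau> \<eta> (int i)) (hperp q D \<tau> \<eta> (int i - 1))"
    using rel_same_holds[OF e iD] rel_next_holds[OF e iD] unfolding E_def Q_def by simp_all
  have "N * (inverse \<eta> * ellm q D \<tau> \<eta> (int i)) = inverse \<eta> * (N * ellm q D \<tau> \<eta> (int i))"
    by (simp only: mult_ac)
  also have "\<dots> = inverse \<tau> * (1 - Q / E) * (N * ellm q D \<tau> \<eta> (int i - 1))
      + (\<tau> * E + inverse \<tau>) * (1 - Q / E) * (N * ellp q D \<tau> \<eta> (int i - 1))
      - \<tau> * (E - Q + 1) * (N * ellp q D \<tau> \<eta> (int i))"
  proof (cases i)
    case 0
    then show ?thesis
      using inv_eta_ellm_algebra_0[OF tau_nonzero e E0] rels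
        ellm_normalized[of i \<eta>] ellp_prev_normalized[OF iD, of \<eta>] ellp_normalized[OF iD, of \<eta>]
      unfolding E_def Q_def N_def by simp
  next
    case (Suc j)
    have jD: "j < D" and Qj: "Q / q = q ^ j" using iD Suc q_nonzero by (simp_all add: Q_def)
    have rels_prev: "rel_same E \<tau> \<eta> (Q / q) (hD q D \<tau> \<eta> j) (hperp q D \<tau> \<eta> (int i - 1)) (hperp q D \<tau> \<eta> (int j - 1))"
      "rel_next E \<tau> \<eta> (Q / q) (hD q D \<tau> \<eta> i) (hperp q D \<tau> \<eta> (int i - 1)) (hperp q D \<tau> \<eta> (int j - 1))"
      using rel_same_holds[OF e jD] rel_next_holds[OF e jD] unfolding E_def Qj Suc by simp_all
    show ?thesis
      using inv_eta_ellm_algebra[OF q_nonzero tau_nonzero e E0 rels rels_prev]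
        ellm_normalized[of i \<eta>] ellp_prev_normalized[OF iD, of \<eta>] ellp_normalized[OF iD, of \<eta>]
        ellm_prev_normalized[OF iD Suc, of \<eta>] iD Qj
      unfolding E_def Q_def N_def by simp
  qed
  also have "\<dots> = N * (inverse \<tau> * (1 - Q / E) * ellm q D \<tau> \<eta> (int i - 1)
      + (\<tau> * E + inverse \<tau>) * (1 - Q / E) * ellp q D \<tau> \<eta> (int i - 1)
      - \<tau> * (E - Q + 1) * ellp q D \<tau> \<eta> (int i))"
    by (simp add: algebra_simps)
  finally show ?thesis
    using ell_norm_nonzero[of i] unfolding E_def Q_def N_def by simp
qed

lemma inverse_eta_mult_ellp:
  assumes e: "\<eta> \<noteq> 0" and iD: "i < D"
  shows "inverse \<eta> * ellp q D \<tau> \<eta> (int i) =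
      inverse \<tau> * (q * q ^ i / q ^ D) * ellm q D \<tau> \<eta> (int i)
      + (\<tau> * q ^ D + inverse \<tau>) * (q * q ^ i / q ^ D) * ellp q D \<tau> \<eta> (int i)
      + \<tau> * (1 - q * q ^ i) * ellp q D \<tau> \<eta> (int i + 1)"
proof -
  define E where "E = q ^ D"
  define Q where "Q = q ^ i"
  define N where "N = ell_norm q D \<tau> i"
  have E0: "E \<noteq> 0" unfolding E_def using q_nonzero by simp
  have rels: "rel_same E \<tau> \<eta> Q (hD q D \<tau> \<eta> i) (hperp q D \<tau> \<eta> (int i)) (hperp q D \<tau> \<eta> (int i - 1))"
    "rel_next E \<tau> \<eta> Q (hD q D \<tau> \<eta> (i + 1)) (hperp q D \<tau> \<eta> (int i)) (hperp q D \<tau> \<eta> (int i - 1))"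
    using rel_same_holds[OF e iD] rel_next_holds[OF e iD] unfolding E_def Q_def by simp_all
  have "N * (inverse \<eta> * ellp q D \<tau> \<eta> (int i)) = inverse \<eta> * (N * ellp q D \<tau> \<eta> (int i))"
    by (simp only: mult_ac)
  also have "\<dots> = inverse \<tau> * (q * Q / E) * (N * ellm q D \<tau> \<eta> (int i))
      + (\<tau> * E + inverse \<tau>) * (q * Q / E) * (N * ellp q D \<tau> \<eta> (int i))
      + \<tau> * (N * (1 - q * Q) * ellp q D \<tau> \<eta> (int i + 1))"
  proof (cases "Suc i < D")
    case True
    have rels_next: "rel_same E \<tau> \<eta> (q * Q) (hD q D \<tau> \<eta> (i + 1)) (hperp q D \<tau> \<eta> (int i + 1)) (hperp q D \<tau> \<eta> (int i))"
      "rel_next E \<tau> \<eta> (q * Q) (hD q D \<tau> \<eta> (Suc (Suc i))) (hperp q D \<tau> \<eta> (int i + 1)) (hperp q D \<tau> \<eta> (int i))"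
      using rel_same_holds[OF e True] rel_next_holds[OF e True] unfolding E_def Q_def by (simp_all add: add.commute)
    show ?thesis
      using inv_eta_ellp_algebra[OF q_nonzero tau_nonzero e E0 rels rels_next]
        ellm_normalized[of i \<eta>] ellp_normalized[OF iD, of \<eta>] ellp_next_normalized[OF True, of \<eta>] iD
      unfolding E_def Q_def N_def by simp
  next
    case False
    then have top: "Suc i = D" using iD by simp
    then have "E = q * Q" unfolding E_def Q_def by auto
    then show ?thesis
      using inv_eta_ellp_algebra_top[OF q_nonzero tau_nonzero e E0 _ rels]
        ellm_normalized[of i \<eta>] ellp_normalized[OF iD, of \<eta>] ellp_next_normalized_top[OF e top] iD
      unfolding E_def Q_def N_def by simp
  qed
  also have "\<dots> = N * (inverse \<tau> * (q * Q / E) * ellm q D \<tau> \<eta> (int i)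
      + (\<tau> * E + inverse \<tau>) * (q * Q / E) * ellp q D \<tau> \<eta> (int i)
      + \<tau> * (1 - q * Q) * ellp q D \<tau> \<eta> (int i + 1))"
    by (simp add: algebra_simps)
  finally show ?thesis
    using ell_norm_nonzero[of i] unfolding E_def Q_def N_def by simp
qed

end

lemma inj_power_of_nat:
  assumes "1 < m"
  shows "inj ((^) (of_nat m :: complex))"
proof (rule injI)
  fix a b assume "(of_nat m :: complex) ^ a = of_nat m ^ b"
  then have "m ^ a = m ^ b" by (metis of_nat_eq_iff of_nat_power)
  with assms show "a = b" by simp
qed

theorem theorem9p5:
  fixes p k D :: nat and e :: real and q \<tau> \<eta> :: complex and i :: nat
  assumes "prime p" and "k \<ge> 1"
    and "D \<ge> 3"
    and "e \<in> {0, 1/2, 1, 3/2, 2}"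
    and "e \<in> {1/2, 3/2} \<longrightarrow> (\<exists>m::nat. p ^ k = m ^ 2)"
    and "q = of_nat (p ^ k)"
    and "\<tau> = \<i> * complex_of_real (real (p ^ k) powr (- (real D + e) / 2))"
    and "\<eta> \<noteq> 0"
    and "i \<le> D - 1"
  shows
   "\<eta> * ellm q D \<tau> \<eta> (int i) =
      (\<tau> * q ^ D + inverse \<tau>) * (q powi (int i - int D) - 1) * ellp q D \<tau> \<eta> (int i - 1)
      + (\<tau> * q ^ D + inverse \<tau>) * q powi (int i - int D) * ellm q D \<tau> \<eta> (int i)
      + \<tau> * (q ^ D - q ^ (i + 1) + 1) * ellp q D \<tau> \<eta> (int i)
      + \<tau> * (1 - q ^ (i + 1)) * ellm q D \<tau> \<eta> (int i + 1) \<and>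
    inverse \<eta> * ellm q D \<tau> \<eta> (int i) =
      inverse \<tau> * (1 - q powi (int i - int D)) * ellm q D \<tau> \<eta> (int i - 1)
      + (\<tau> * q ^ D + inverse \<tau>) * (1 - q powi (int i - int D)) * ellp q D \<tau> \<eta> (int i - 1)
      - \<tau> * (q ^ D - q ^ i + 1) * ellp q D \<tau> \<eta> (int i) \<and>
    \<eta> * ellp q D \<tau> \<eta> (int i) =
      inverse \<tau> * (1 - q powi (int i - int D)) * ellp q D \<tau> \<eta> (int i - 1)
      - inverse \<tau> * q powi (int i - int D) * ellm q D \<tau> \<eta> (int i) \<and>
    inverse \<eta> * ellp q D \<tau> \<eta> (int i) =
      inverse \<tau> * q powi (int i - int D + 1) * ellm q D \<tau> \<eta> (int i)
      + (\<tau> * q ^ D + inverse \<tau>) * q powi (int i - int D + 1) * ellp q D \<tau> \<eta> (int i)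
      + \<tau> * (1 - q ^ (i + 1)) * ellp q D \<tau> \<eta> (int i + 1)"
proof -
  have pk: "1 < p ^ k"
    using one_less_power[OF prime_gt_1_nat[OF assms(1)], of k] assms(2) by simp
  interpret dual_q_krawtchouk q \<tau> D
  proof
    show "inj ((^) q)" unfolding assms(6) by (rule inj_power_of_nat[OF pk])
    show "\<tau> \<noteq> 0" unfolding assms(7) using pk by (simp add: prime_gt_0_nat[OF assms(1)])
  qed (fact assms(3))
  have iD: "i < D" using assms(3,9) by simp
  have "q powi (int i - int D) = q ^ i / q ^ D" "q powi (int i - int D + 1) = q * q ^ i / q ^ D"
    using q_nonzero by (simp_all add: power_int_diff power_int_add)
  then show ?thesis
    using eta_mult_ellm[OF assms(8) iD] inverse_eta_mult_ellm[OF assms(8) iD]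
      eta_mult_ellp[OF assms(8) iD] inverse_eta_mult_ellp[OF assms(8) iD]
    by simp
qed

end
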